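(* Let $X_t=\sum_{i=0}^\infty a_i\varepsilon_{t-i}$ with $a_0=1$, $\sum_ia_i^2<\infty$, where $(\varepsilon_k)$ are iid with mean $0$, finite positive variance, and density $f_\varepsilon$. Let $Y_n=X_{n+1}-\varepsilon_{n+1}$ and let $Y_n^*$ be $Y_n$ with $\varepsilon_0$ replaced by $\varepsilon_0^*$, an independent copy. Let $\gamma\ge0$, and assume $\mathbb E(|\varepsilon_1|^{2+\gamma})<\infty$ and $\kappa:=\int_{\mathbb R}|f'_\varepsilon(u)|^2(1+|u|)^\gamma du<\infty$. Then $\|\rho_{w_\gamma}(Y_n,Y_n^* )\|=O(|a_{n+1}|)$.
   Context: $w_\gamma(du)=(1+|u|)^\gamma du$. With $h(\theta,y)=f_\varepsilon(\theta-y)$ (the conditional density of $X_{n+1}$ given $Y_n=y$), $H_{w_\gamma}(y)=\int_{\mathbb R}|\partial h(\theta,y)/\partial y|^2w_\gamma(d\theta)=\int|f'_\varepsilon(\theta-y)|^2(1+|\theta|)^\gamma d\theta$ and $\rho_{w_\gamma}(u,v)=|\int_u^vH_{w_\gamma}^{1/2}(y)dy|$. $\|\xi\|=(\mathbb E\xi^2)^{1/2}$. *)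

theory Defs
  imports "HOL-Probability.Probability"
begin

text \<open>Weight w_gamma(du) = (1+|u|)^gamma du; with h(theta,y) = f(theta - y),
  H_w(y) = int |f'(theta - y)|^2 (1+|theta|)^gamma d theta.\<close>
definition H_w :: "real \<Rightarrow> (real \<Rightarrow> real) \<Rightarrow> real \<Rightarrow> real" where
  "H_w \<gamma> f' y = (LINT \<theta>|lborel. (f' (\<theta> - y))\<^sup>2 * (1 + \<bar>\<theta>\<bar>) powr \<gamma>)"

definition rho_w :: "real \<Rightarrow> (real \<Rightarrow> real) \<Rightarrow> real \<Rightarrow> real \<Rightarrow> real" where
  "rho_w \<gamma> f' u v = \<bar>interval_lebesgue_integral lborel (ereal u) (ereal v) (\<lambda>y. sqrt (H_w \<gamma> f' y))\<bar>"

text \<open>Squared L2 norm E(xi^2) of a random variable (as an extended nonnegative value,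
  so that non-square-integrability is not silently mapped to 0).\<close>
definition L2sq :: "'a measure \<Rightarrow> ('a \<Rightarrow> real) \<Rightarrow> ennreal" where
  "L2sq M \<xi> = (\<integral>\<^sup>+ \<omega>. ennreal ((\<xi> \<omega>)\<^sup>2) \<partial>M)"

end

theory Submission
  imports Defs
begin

text \<open>Let \<open>p = 2 + \<gamma>\<close> and \<open>\<psi>(t) = (1 + t\<^sup>2)^{p/2}\<close> (\<open>bracket_powr p t\<close> below). Since
  \<open>H_w(y) \<le> \<kappa> (1 + |y|)^\<gamma>\<close>, the distance satisfies \<open>\<rho>_w(u, v) \<le> \<surd>\<kappa> |v - u| (1 + |u| + |v|)^{\<gamma>/2}\<close>.
  Replacing \<open>\<epsilon>\<^sub>0\<close> by \<open>\<epsilon>\<^sub>0\<^sup>*\<close> changes a single term of the series, so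
  \<open>Y\<^sub>n\<^sup>* - Y\<^sub>n = a\<^sub>n\<^sub>+\<^sub>1 (\<epsilon>\<^sub>0\<^sup>* - \<epsilon>\<^sub>0)\<close>, and a Young-type inequality gives
  \<open>\<rho>_w(Y\<^sub>n, Y\<^sub>n\<^sup>*)\<^sup>2 \<le> \<kappa> a\<^sub>n\<^sub>+\<^sub>1\<^sup>2 (|\<epsilon>\<^sub>0\<^sup>* - \<epsilon>\<^sub>0|^p + (1 + |Y\<^sub>n| + |Y\<^sub>n\<^sup>*|)^p)\<close>.
  It remains to bound \<open>\<bbbE>\<psi>(Y)\<close> uniformly for \<open>Y = \<Sum>\<^sub>j c\<^sub>j Z\<^sub>j\<close> with independent centred \<open>Z\<^sub>j\<close> of
  bounded \<open>p\<close>-th moment: a second-order Taylor expansion of \<open>\<psi>\<close> and independence give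
  \<open>\<bbbE>\<psi>(S\<^sub>N\<^sub>+\<^sub>1) \<le> \<bbbE>\<psi>(S\<^sub>N) (1 + K c\<^sub>N\<^sup>2)\<close> for the partial sums, hence \<open>\<bbbE>\<psi>(S\<^sub>N) \<le> exp (K \<Sum>\<^sub>j c\<^sub>j\<^sup>2)\<close>,
  and Fatou's lemma passes to the limit, which exists almost surely by Kolmogorov's maximal
  inequality.\<close>

section \<open>Independence\<close>

lemma (in prob_space) indep_sets_reindex:
  assumes "indep_sets F I" "inj_on h J" "h ` J \<subseteq> I"
  shows "indep_sets (\<lambda>j. F (h j)) J"
  unfolding indep_sets_def
proof (intro conjI ballI allI impI subsetI)
  fix j x assume "j \<in> J" "x \<in> F (h j)"
  then show "x \<in> events" using assms unfolding indep_sets_def by auto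
next
  fix K A assume K: "K \<subseteq> J" "K \<noteq> {}" "finite K" and A: "A \<in> Pi K (\<lambda>j. F (h j))"
  define B where "B i = A (inv_into K h i)" for i
  have inj: "inj_on h K" using assms(2) K(1) inj_on_subset by blast
  have B: "B \<in> Pi (h ` K) F" using A inj by (auto simp: B_def Pi_def)
  have eq1: "(\<Inter>j\<in>K. A j) = (\<Inter>i\<in>h ` K. B i)" using inj by (auto simp: B_def)
  have eq2: "(\<Prod>j\<in>K. prob (A j)) = (\<Prod>i\<in>h ` K. prob (B i))"
  proof -
    have "(\<Prod>i\<in>h ` K. prob (B i)) = (\<Prod>j\<in>K. prob (B (h j)))"
      using prod.reindex[OF inj, of "\<lambda>i. prob (B i)"] by (simp add: comp_def)
    also have "\<dots> = (\<Prod>j\<in>K. prob (A j))" using inj by (intro prod.cong) (auto simp: B_def)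
    finally show ?thesis by simp
  qed
  have "prob (\<Inter>i\<in>h ` K. B i) = (\<Prod>i\<in>h ` K. prob (B i))"
  proof -
    have "h ` K \<subseteq> I" using K(1) assms(3) by auto
    moreover have "h ` K \<noteq> {}" "finite (h ` K)" using K by auto
    ultimately show ?thesis using assms(1) B unfolding indep_sets_def by blast
  qed
  then show "prob (\<Inter>j\<in>K. A j) = (\<Prod>j\<in>K. prob (A j))" using eq1 eq2 by metis
qed

lemma (in prob_space) indep_vars_reindex:
  assumes "indep_vars M' X I" "inj_on h J" "h ` J \<subseteq> I"
  shows "indep_vars (\<lambda>j. M' (h j)) (\<lambda>j. X (h j)) J"
  using assms indep_sets_reindex[of "\<lambda>i. {X i -` A \<inter> space M | A. A \<in> sets (M' i)}" I h J]
  unfolding indep_vars_def2 by auto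

lemma (in prob_space) indep_var_compose_restrict:
  assumes "indep_vars (\<lambda>_. borel) X I" "A \<inter> B = {}" "A \<subseteq> I" "B \<subseteq> I"
    and "F \<in> borel_measurable (PiM A (\<lambda>_. borel))" "G \<in> borel_measurable (PiM B (\<lambda>_. borel))"
  shows "indep_var borel (\<lambda>\<omega>. F (restrict (\<lambda>i. X i \<omega>) A)) borel (\<lambda>\<omega>. G (restrict (\<lambda>i. X i \<omega>) B))"
  using indep_var_compose[OF indep_var_restrict[OF assms(1-4)] assms(5,6)] by (simp add: comp_def)

lemma (in prob_space) indep_var_weighted_sum_single:
  fixes X :: "'i \<Rightarrow> 'a \<Rightarrow> real"
  assumes "indep_vars (\<lambda>_. borel) X I" "J \<subseteq> I" "k \<in> I" "k \<notin> J"
  shows "indep_var borel (\<lambda>\<omega>. \<Sum>j\<in>J. c j * X j \<omega>) borel (X k)"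
proof -
  have "indep_var borel (\<lambda>\<omega>. (\<lambda>x. \<Sum>j\<in>J. c j * x j) (restrict (\<lambda>i. X i \<omega>) J))
     borel (\<lambda>\<omega>. (\<lambda>x. x k) (restrict (\<lambda>i. X i \<omega>) {k}))"
    using assms by (intro indep_var_compose_restrict) auto
  moreover have "(\<lambda>\<omega>. (\<lambda>x. \<Sum>j\<in>J. c j * x j) (restrict (\<lambda>i. X i \<omega>) J)) = (\<lambda>\<omega>. \<Sum>j\<in>J. c j * X j \<omega>)"
    by (intro ext sum.cong) auto
  ultimately show ?thesis by (simp add: fun_eq_iff)
qed

lemma identically_distributed_integrable_iff:
  fixes X Y :: "'a \<Rightarrow> real" and g :: "real \<Rightarrow> real"
  assumes "distributed M lborel X (\<lambda>x. ennreal (f x))" "distributed M lborel Y (\<lambda>x. ennreal (f x))"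
    and "\<And>x. 0 \<le> f x" "g \<in> borel_measurable borel"
  shows "integrable M (\<lambda>\<omega>. g (X \<omega>)) \<longleftrightarrow> integrable M (\<lambda>\<omega>. g (Y \<omega>))"
  using distributed_integrable[OF assms(1), of g] distributed_integrable[OF assms(2), of g] assms(3,4)
  by simp

lemma identically_distributed_integral_eq:
  fixes X Y :: "'a \<Rightarrow> real" and g :: "real \<Rightarrow> real"
  assumes "distributed M lborel X (\<lambda>x. ennreal (f x))" "distributed M lborel Y (\<lambda>x. ennreal (f x))"
    and "\<And>x. 0 \<le> f x" "g \<in> borel_measurable borel"
  shows "(\<integral>\<omega>. g (X \<omega>) \<partial>M) = (\<integral>\<omega>. g (Y \<omega>) \<partial>M)"
  using distributed_integral[OF assms(1), of g] distributed_integral[OF assms(2), of g] assms(3,4)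
  by simp

section \<open>The weight \<open>(1 + t\<^sup>2)^{p/2}\<close> and its Taylor expansion\<close>

definition bracket_powr :: "real \<Rightarrow> real \<Rightarrow> real" where
  "bracket_powr p t = (1 + t\<^sup>2) powr (p / 2)"

definition bracket_powr_deriv :: "real \<Rightarrow> real \<Rightarrow> real" where
  "bracket_powr_deriv p t = p * t * (1 + t\<^sup>2) powr (p / 2 - 1)"

definition bracket_powr_deriv2 :: "real \<Rightarrow> real \<Rightarrow> real" where
  "bracket_powr_deriv2 p t =
     p * (1 + t\<^sup>2) powr (p / 2 - 1) + p * (p - 2) * t\<^sup>2 * (1 + t\<^sup>2) powr (p / 2 - 2)"

lemma bracket_powr_measurable [measurable]: "bracket_powr p \<in> borel_measurable borel"
  unfolding bracket_powr_def by measurable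

lemma bracket_powr_deriv_measurable [measurable]: "bracket_powr_deriv p \<in> borel_measurable borel"
  unfolding bracket_powr_deriv_def by measurable

lemma one_plus_sq_pos: "0 < 1 + (t::real)\<^sup>2"
  by (simp add: add_pos_nonneg)

lemma one_plus_sq_powr_add_one: "(1 + (t::real)\<^sup>2) powr (q + 1) = (1 + t\<^sup>2) * (1 + t\<^sup>2) powr q"
  using one_plus_sq_pos[of t] by (simp add: powr_add)

lemma bracket_powr_has_real_derivative:
  "(bracket_powr p has_real_derivative bracket_powr_deriv p t) (at t)"
proof -
  have "((\<lambda>t. (1 + t\<^sup>2) powr (p / 2)) has_real_derivative
          (p / 2) * (1 + t\<^sup>2) powr (p / 2 - of_nat 1) * (2 * t)) (at t)"
    by (rule DERIV_fun_powr) (auto intro!: derivative_eq_intros simp: one_plus_sq_pos)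
  then show ?thesis unfolding bracket_powr_def bracket_powr_deriv_def by (simp add: field_simps)
qed

lemma bracket_powr_deriv_has_real_derivative:
  "(bracket_powr_deriv p has_real_derivative bracket_powr_deriv2 p t) (at t)"
proof -
  have d: "((\<lambda>t. (1 + t\<^sup>2) powr (p / 2 - 1)) has_real_derivative
             (p / 2 - 1) * (1 + t\<^sup>2) powr (p / 2 - 1 - of_nat 1) * (2 * t)) (at t)"
    by (rule DERIV_fun_powr) (auto intro!: derivative_eq_intros simp: one_plus_sq_pos)
  have "((\<lambda>t. p * t * (1 + t\<^sup>2) powr (p / 2 - 1)) has_real_derivative
          p * (1 + t\<^sup>2) powr (p / 2 - 1)
          + p * t * ((p / 2 - 1) * (1 + t\<^sup>2) powr (p / 2 - 1 - of_nat 1) * (2 * t))) (at t)"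
    by (rule derivative_eq_intros refl d | simp)+
  moreover have "p / 2 - 1 - of_nat 1 = p / 2 - 2" "(p / 2 - 1) * 2 = p - 2"
    by simp_all
  ultimately show ?thesis
    unfolding bracket_powr_deriv_def bracket_powr_deriv2_def
    by (simp add: power2_eq_square algebra_simps)
qed

lemma bracket_powr_pos: "0 < bracket_powr p t"
  using one_plus_sq_pos[of t] by (simp add: bracket_powr_def)

lemma abs_bracket_powr [simp]: "\<bar>bracket_powr p t\<bar> = bracket_powr p t"
  using bracket_powr_pos[of p t] by simp

lemma one_le_bracket_powr: "0 \<le> p \<Longrightarrow> 1 \<le> bracket_powr p t"
  unfolding bracket_powr_def by (intro ge_one_powr_ge_zero) auto

lemma abs_powr_le_bracket_powr:
  assumes "0 \<le> p"
  shows "\<bar>t\<bar> powr p \<le> bracket_powr p t"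
proof (cases "t = 0")
  case True
  then show ?thesis using bracket_powr_pos[of p t] by simp
next
  case False
  have "\<bar>t\<bar> powr p = (\<bar>t\<bar> powr 2) powr (p / 2)" by (simp only: powr_powr) simp
  also have "\<bar>t\<bar> powr 2 = t\<^sup>2" using False by simp
  also have "t\<^sup>2 powr (p / 2) \<le> (1 + t\<^sup>2) powr (p / 2)"
    using assms by (intro powr_mono2) auto
  finally show ?thesis by (simp add: bracket_powr_def)
qed

lemma bracket_powr_le_abs_powr:
  assumes "2 \<le> p"
  shows "bracket_powr p z \<le> 2 powr (p / 2) * (1 + \<bar>z\<bar> powr p)"
proof (cases "z\<^sup>2 \<le> 1")
  case True
  have "(1 + z\<^sup>2) powr (p / 2) \<le> 2 powr (p / 2)" using True assms by (intro powr_mono2) auto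
  also have "\<dots> \<le> 2 powr (p / 2) * (1 + \<bar>z\<bar> powr p)" by simp
  finally show ?thesis unfolding bracket_powr_def .
next
  case False
  then have "z \<noteq> 0" by auto
  have "(1 + z\<^sup>2) powr (p / 2) \<le> (2 * \<bar>z\<bar> powr 2) powr (p / 2)"
    using False assms \<open>z \<noteq> 0\<close> by (intro powr_mono2) auto
  also have "\<dots> = 2 powr (p / 2) * (\<bar>z\<bar> powr 2) powr (p / 2)" by (intro powr_mult)
  also have "\<dots> = 2 powr (p / 2) * \<bar>z\<bar> powr p" by (simp only: powr_powr) simp
  also have "\<dots> \<le> 2 powr (p / 2) * (1 + \<bar>z\<bar> powr p)" by (intro mult_left_mono) auto
  finally show ?thesis unfolding bracket_powr_def .
qed

lemma abs_bracket_powr_deriv_le: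
  assumes "0 \<le> p"
  shows "\<bar>bracket_powr_deriv p t\<bar> \<le> p * bracket_powr p t"
proof -
  have "\<bar>t\<bar> \<le> 1 + t\<^sup>2"
  proof (cases "\<bar>t\<bar> \<le> 1")
    case False
    then have "\<bar>t\<bar> * 1 \<le> \<bar>t\<bar> * \<bar>t\<bar>" by (intro mult_left_mono) auto
    then show ?thesis by (simp add: power2_eq_square)
  qed (simp add: add_increasing2)
  then have "\<bar>t\<bar> * (1 + t\<^sup>2) powr (p / 2 - 1) \<le> (1 + t\<^sup>2) * (1 + t\<^sup>2) powr (p / 2 - 1)"
    by (intro mult_right_mono) auto
  also have "\<dots> = bracket_powr p t"
    using one_plus_sq_powr_add_one[of t "p / 2 - 1"] by (simp add: bracket_powr_def)
  finally show ?thesis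
    unfolding bracket_powr_deriv_def using assms by (simp add: abs_mult mult.assoc mult_left_mono)
qed

lemma bracket_powr_deriv2_le:
  assumes "2 \<le> p"
  shows "bracket_powr_deriv2 p t \<le> p * (p - 1) * (1 + t\<^sup>2) powr (p / 2 - 1)"
proof -
  have "t\<^sup>2 * (1 + t\<^sup>2) powr (p / 2 - 2) \<le> (1 + t\<^sup>2) * (1 + t\<^sup>2) powr (p / 2 - 2)"
    by (intro mult_right_mono) auto
  also have "\<dots> = (1 + t\<^sup>2) powr (p / 2 - 1)"
    using one_plus_sq_powr_add_one[of t "p / 2 - 2"] by simp
  finally have "p * (p - 2) * (t\<^sup>2 * (1 + t\<^sup>2) powr (p / 2 - 2))
      \<le> p * (p - 2) * (1 + t\<^sup>2) powr (p / 2 - 1)"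
    using assms by (intro mult_left_mono) auto
  then show ?thesis unfolding bracket_powr_deriv2_def by (simp add: algebra_simps)
qed

lemma one_plus_sq_le_mult:
  fixes t x y :: real
  assumes "\<bar>t\<bar> \<le> \<bar>x\<bar> + \<bar>y\<bar>"
  shows "1 + t\<^sup>2 \<le> 2 * ((1 + x\<^sup>2) * (1 + y\<^sup>2))"
proof -
  have "t\<^sup>2 \<le> (\<bar>x\<bar> + \<bar>y\<bar>)\<^sup>2"
    using assms by (metis abs_ge_zero abs_le_square_iff abs_of_nonneg add_nonneg_nonneg)
  also have "\<dots> \<le> 2 * x\<^sup>2 + 2 * y\<^sup>2"
    using zero_le_power2[of "\<bar>x\<bar> - \<bar>y\<bar>"] by (simp only: power2_sum power2_diff power2_abs)
  finally have "t\<^sup>2 \<le> 2 * x\<^sup>2 + 2 * y\<^sup>2" .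
  moreover have "2 * ((1 + x\<^sup>2) * (1 + y\<^sup>2)) = 2 + 2 * x\<^sup>2 + 2 * y\<^sup>2 + 2 * (x\<^sup>2 * y\<^sup>2)"
    by (simp add: algebra_simps)
  moreover have "0 \<le> x\<^sup>2 * y\<^sup>2" by simp
  ultimately show ?thesis by linarith
qed

text \<open>In Taylor's formula the second derivative is evaluated at an intermediate point \<open>t\<close>;
  since \<open>1 + t\<^sup>2 \<le> 2 (1 + x\<^sup>2) (1 + y\<^sup>2)\<close>, the remainder is controlled by the weight at \<open>x\<close>.\<close>

lemma bracket_powr_taylor_le:
  assumes p: "2 \<le> p"
  shows "bracket_powr p (x + y) \<le> bracket_powr p x + bracket_powr_deriv p x * y
     + p * (p - 1) / 2 * 2 powr (p / 2 - 1) * bracket_powr p x * ((1 + y\<^sup>2) powr (p / 2 - 1) * y\<^sup>2)"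
proof (cases "y = 0")
  case True
  then show ?thesis by simp
next
  case False
  define diff where "diff m = [bracket_powr p, bracket_powr_deriv p, bracket_powr_deriv2 p] ! m"
    for m :: nat
  have "\<forall>m t. m < 2 \<and> min x (x + y) \<le> t \<and> t \<le> max x (x + y) \<longrightarrow>
      DERIV (diff m) t :> diff (Suc m) t"
    by (auto simp: diff_def bracket_powr_has_real_derivative
        bracket_powr_deriv_has_real_derivative less_2_cases_iff)
  then obtain t where t: "if x + y < x then x + y < t \<and> t < x else x < t \<and> t < x + y"
    and taylor: "bracket_powr p (x + y) = (\<Sum>m<2. diff m x / fact m * ((x + y) - x) ^ m)
      + diff 2 t / fact 2 * ((x + y) - x) ^ 2"
    using Taylor[of 2 diff "bracket_powr p" "min x (x + y)" "max x (x + y)" x "x + y"] False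
    by (auto simp: diff_def)
  have "\<bar>t\<bar> \<le> \<bar>x\<bar> + \<bar>y\<bar>" using t by (auto split: if_splits)
  then have "(1 + t\<^sup>2) powr (p / 2 - 1) \<le> (2 * ((1 + x\<^sup>2) * (1 + y\<^sup>2))) powr (p / 2 - 1)"
    using p one_plus_sq_le_mult by (intro powr_mono2) (auto simp: one_plus_sq_pos)
  also have "\<dots> = 2 powr (p / 2 - 1) * (1 + x\<^sup>2) powr (p / 2 - 1) * (1 + y\<^sup>2) powr (p / 2 - 1)"
    by (simp add: powr_mult one_plus_sq_pos)
  also have "(1 + x\<^sup>2) powr (p / 2 - 1) \<le> bracket_powr p x"
    unfolding bracket_powr_def by (intro powr_mono) auto
  finally have "(1 + t\<^sup>2) powr (p / 2 - 1)
      \<le> 2 powr (p / 2 - 1) * bracket_powr p x * (1 + y\<^sup>2) powr (p / 2 - 1)"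
    by (simp add: mult_left_mono mult_right_mono)
  then have "bracket_powr_deriv2 p t
      \<le> p * (p - 1) * (2 powr (p / 2 - 1) * bracket_powr p x * (1 + y\<^sup>2) powr (p / 2 - 1))"
    using bracket_powr_deriv2_le[OF p, of t] p by (smt (verit) mult_left_mono mult_nonneg_nonneg)
  then have "bracket_powr_deriv2 p t / 2 * y\<^sup>2 \<le> p * (p - 1)
      * (2 powr (p / 2 - 1) * bracket_powr p x * (1 + y\<^sup>2) powr (p / 2 - 1)) / 2 * y\<^sup>2"
    by (intro mult_right_mono divide_right_mono) auto
  moreover have "bracket_powr p (x + y) = bracket_powr p x + bracket_powr_deriv p x * y
      + bracket_powr_deriv2 p t / 2 * y\<^sup>2"
    using taylor by (simp add: diff_def numeral_2_eq_2)
  ultimately show ?thesis by (simp add: algebra_simps)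
qed

definition bracket_taylor_const :: "real \<Rightarrow> real \<Rightarrow> real" where
  "bracket_taylor_const p A =
     p * (p - 1) / 2 * 2 powr (p / 2 - 1) * (1 + A\<^sup>2) powr (p / 2 - 1) * 2 powr (p / 2)"

lemma bracket_taylor_const_nonneg: "1 \<le> p \<Longrightarrow> 0 \<le> bracket_taylor_const p A"
  by (simp add: bracket_taylor_const_def)

lemma bracket_powr_add_mult_le:
  assumes p: "2 \<le> p" and c: "\<bar>c\<bar> \<le> A"
  shows "bracket_powr p (x + c * z) \<le> bracket_powr p x + c * (bracket_powr_deriv p x * z)
     + bracket_taylor_const p A * c\<^sup>2 * (bracket_powr p x * (1 + \<bar>z\<bar> powr p))"
proof -
  have "1 + (c * z)\<^sup>2 \<le> (1 + A\<^sup>2) * (1 + z\<^sup>2)"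
    using power_mono[OF c abs_ge_zero, of 2]
    by (simp add: algebra_simps add_increasing mult_right_mono)
  then have "(1 + (c * z)\<^sup>2) powr (p / 2 - 1) \<le> ((1 + A\<^sup>2) * (1 + z\<^sup>2)) powr (p / 2 - 1)"
    using p by (intro powr_mono2) (auto simp: one_plus_sq_pos)
  also have "\<dots> = (1 + A\<^sup>2) powr (p / 2 - 1) * (1 + z\<^sup>2) powr (p / 2 - 1)"
    by (simp add: powr_mult one_plus_sq_pos)
  finally have "(1 + (c * z)\<^sup>2) powr (p / 2 - 1) * z\<^sup>2
      \<le> (1 + A\<^sup>2) powr (p / 2 - 1) * (1 + z\<^sup>2) powr (p / 2 - 1) * z\<^sup>2"
    by (rule mult_right_mono) simp
  also have "\<dots> = (1 + A\<^sup>2) powr (p / 2 - 1) * ((1 + z\<^sup>2) powr (p / 2 - 1) * z\<^sup>2)"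
    by (simp only: mult.assoc)
  also have "(1 + z\<^sup>2) powr (p / 2 - 1) * z\<^sup>2 \<le> bracket_powr p z"
    using one_plus_sq_powr_add_one[of z "p / 2 - 1"]
      mult_left_mono[of "z\<^sup>2" "1 + z\<^sup>2" "(1 + z\<^sup>2) powr (p / 2 - 1)"]
    by (simp add: bracket_powr_def mult.commute)
  also have "\<dots> \<le> 2 powr (p / 2) * (1 + \<bar>z\<bar> powr p)"
    by (rule bracket_powr_le_abs_powr[OF p])
  finally have "(1 + (c * z)\<^sup>2) powr (p / 2 - 1) * (c * z)\<^sup>2
      \<le> c\<^sup>2 * ((1 + A\<^sup>2) powr (p / 2 - 1) * (2 powr (p / 2) * (1 + \<bar>z\<bar> powr p)))"
    by (simp add: power_mult_distrib mult_left_mono mult.left_commute)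
  then have "p * (p - 1) / 2 * 2 powr (p / 2 - 1) * bracket_powr p x
        * ((1 + (c * z)\<^sup>2) powr (p / 2 - 1) * (c * z)\<^sup>2)
      \<le> p * (p - 1) / 2 * 2 powr (p / 2 - 1) * bracket_powr p x
        * (c\<^sup>2 * ((1 + A\<^sup>2) powr (p / 2 - 1) * (2 powr (p / 2) * (1 + \<bar>z\<bar> powr p))))"
    using p bracket_powr_pos[of p x] by (intro mult_left_mono) auto
  with bracket_powr_taylor_le[OF p, of x "c * z"] show ?thesis
    by (simp add: bracket_taylor_const_def mult_ac)
qed

section \<open>Kolmogorov's maximal inequality and almost sure convergence\<close>

lemma (in prob_space) expectation_sum_sq_indep:
  fixes X :: "'i \<Rightarrow> 'a \<Rightarrow> real"
  assumes indep: "indep_vars (\<lambda>_. borel) X I" and J: "finite J" "J \<subseteq> I"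
    and int1: "\<And>j. j \<in> I \<Longrightarrow> integrable M (X j)"
    and int2: "\<And>j. j \<in> I \<Longrightarrow> integrable M (\<lambda>\<omega>. (X j \<omega>)\<^sup>2)"
    and mean: "\<And>j. j \<in> I \<Longrightarrow> expectation (X j) = 0"
  shows "integrable M (\<lambda>\<omega>. (\<Sum>j\<in>J. X j \<omega>)\<^sup>2) \<and>
    expectation (\<lambda>\<omega>. (\<Sum>j\<in>J. X j \<omega>)\<^sup>2) = (\<Sum>j\<in>J. expectation (\<lambda>\<omega>. (X j \<omega>)\<^sup>2))"
  using J
proof (induction J rule: finite_induct)
  case empty
  then show ?case by simp
next
  case (insert k J)
  define T where "T = (\<lambda>\<omega>. \<Sum>j\<in>J. X j \<omega>)"
  have IH: "integrable M (\<lambda>\<omega>. (T \<omega>)\<^sup>2)"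
    "expectation (\<lambda>\<omega>. (T \<omega>)\<^sup>2) = (\<Sum>j\<in>J. expectation (\<lambda>\<omega>. (X j \<omega>)\<^sup>2))"
    using insert by (simp_all add: T_def)
  have "indep_var borel T borel (X k)"
    using indep_var_weighted_sum_single[OF indep, of J k "\<lambda>_. 1"] insert by (simp add: T_def)
  moreover have "integrable M T" "integrable M (X k)" using insert int1 by (auto simp: T_def)
  ultimately have cross: "integrable M (\<lambda>\<omega>. T \<omega> * X k \<omega>)" "expectation (\<lambda>\<omega>. T \<omega> * X k \<omega>) = 0"
    using mean[of k] insert by (simp_all add: indep_var_integrable indep_var_lebesgue_integral)
  have sq: "(\<Sum>j\<in>insert k J. X j \<omega>)\<^sup>2 = ((T \<omega>)\<^sup>2 + 2 * (T \<omega> * X k \<omega>)) + (X k \<omega>)\<^sup>2" for \<omega>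
    using insert by (simp add: T_def power2_sum algebra_simps)
  have "integrable M (\<lambda>\<omega>. (T \<omega>)\<^sup>2 + 2 * (T \<omega> * X k \<omega>))" using IH cross by simp
  then show ?case
    unfolding sq using insert IH cross int2[of k]
    by simp
qed

lemma of_bool_ex_eq_sum_first:
  fixes m N :: nat
  shows "(of_bool (\<exists>k\<in>{m..N}. P k) :: real) = (\<Sum>k\<in>{m..N}. of_bool (P k \<and> (\<forall>i\<in>{m..<k}. \<not> P i)))"
proof (cases "\<exists>k\<in>{m..N}. P k")
  case True
  define k0 where "k0 = (LEAST k. k \<in> {m..N} \<and> P k)"
  have k0: "k0 \<in> {m..N}" "P k0"
    using True LeastI[of "\<lambda>k. k \<in> {m..N} \<and> P k"] unfolding k0_def by blast+
  have least: "k0 \<le> k" if "k \<in> {m..N}" "P k" for k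
    using that Least_le[of "\<lambda>k. k \<in> {m..N} \<and> P k"] unfolding k0_def by blast
  have "(P k \<and> (\<forall>i\<in>{m..<k}. \<not> P i)) \<longleftrightarrow> k = k0" if "k \<in> {m..N}" for k
  proof
    assume *: "P k \<and> (\<forall>i\<in>{m..<k}. \<not> P i)"
    then have "k0 \<le> k" using least that by blast
    moreover have "\<not> k0 < k" using * k0 by auto
    ultimately show "k = k0" by simp
  next
    assume "k = k0"
    then show "P k \<and> (\<forall>i\<in>{m..<k}. \<not> P i)" using k0 least by fastforce
  qed
  then have "(\<Sum>k\<in>{m..N}. of_bool (P k \<and> (\<forall>i\<in>{m..<k}. \<not> P i)) :: real)
      = (\<Sum>k\<in>{m..N}. of_bool (k = k0))"
    by (intro sum.cong) auto
  then show ?thesis using True k0 by simp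
qed simp

lemma (in prob_space) indep_var_first_exceedance:
  fixes X :: "nat \<Rightarrow> 'a \<Rightarrow> real"
  assumes indep: "indep_vars (\<lambda>_. borel) X UNIV" and k: "m \<le> k" "k \<le> N"
  shows "indep_var
    borel (\<lambda>\<omega>. (\<Sum>j\<in>{m..<k}. X j \<omega>) * of_bool (lam \<le> \<bar>\<Sum>j\<in>{m..<k}. X j \<omega>\<bar>
      \<and> (\<forall>i\<in>{m..<k}. \<not> lam \<le> \<bar>\<Sum>j\<in>{m..<i}. X j \<omega>\<bar>)))
    borel (\<lambda>\<omega>. \<Sum>j\<in>{k..<N}. X j \<omega>)"
proof -
  define F where "F x = (\<Sum>j\<in>{m..<k}. x j) * of_bool (lam \<le> \<bar>\<Sum>j\<in>{m..<k}. x j\<bar>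
    \<and> (\<forall>i\<in>{m..<k}. \<not> lam \<le> \<bar>\<Sum>j\<in>{m..<i}. x j\<bar>))" for x :: "nat \<Rightarrow> real"
  define G where "G x = (\<Sum>j\<in>{k..<N}. x j)" for x :: "nat \<Rightarrow> real"
  have "F \<in> borel_measurable (PiM {m..<k} (\<lambda>_. borel))" unfolding F_def by measurable
  moreover have "G \<in> borel_measurable (PiM {k..<N} (\<lambda>_. borel))" unfolding G_def by measurable
  ultimately have "indep_var borel (\<lambda>\<omega>. F (restrict (\<lambda>i. X i \<omega>) {m..<k}))
      borel (\<lambda>\<omega>. G (restrict (\<lambda>i. X i \<omega>) {k..<N}))"
    by (intro indep_var_compose_restrict[OF indep]) auto
  moreover have "F (restrict (\<lambda>i. X i \<omega>) {m..<k}) = (\<Sum>j\<in>{m..<k}. X j \<omega>)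
      * of_bool (lam \<le> \<bar>\<Sum>j\<in>{m..<k}. X j \<omega>\<bar> \<and> (\<forall>i\<in>{m..<k}. \<not> lam \<le> \<bar>\<Sum>j\<in>{m..<i}. X j \<omega>\<bar>))"
    for \<omega>
  proof -
    have restrict_sum: "(\<Sum>j\<in>{m..<i}. restrict (\<lambda>i. X i \<omega>) {m..<k} j) = (\<Sum>j\<in>{m..<i}. X j \<omega>)"
      if "i \<le> k" for i
      using that by (intro sum.cong) auto
    have "(\<forall>i\<in>{m..<k}. \<not> lam \<le> \<bar>\<Sum>j\<in>{m..<i}. restrict (\<lambda>i. X i \<omega>) {m..<k} j\<bar>)
        \<longleftrightarrow> (\<forall>i\<in>{m..<k}. \<not> lam \<le> \<bar>\<Sum>j\<in>{m..<i}. X j \<omega>\<bar>)"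
      using restrict_sum by (intro ball_cong) auto
    then show ?thesis unfolding F_def restrict_sum[OF order_refl] by simp
  qed
  moreover have "G (restrict (\<lambda>i. X i \<omega>) {k..<N}) = (\<Sum>j\<in>{k..<N}. X j \<omega>)" for \<omega>
    unfolding G_def by (intro sum.cong) auto
  ultimately show ?thesis by simp
qed

text \<open>The first time \<open>k\<close> at which the partial sum exceeds \<open>\<lambda>\<close> depends only on \<open>X\<^sub>m, \<dots>, X\<^sub>k\<^sub>-\<^sub>1\<close>,
  so the rest \<open>T\<^sub>N - T\<^sub>k\<close> is independent of it and the cross term vanishes.\<close>

lemma (in prob_space) kolmogorov_first_exceedance:
  fixes X :: "nat \<Rightarrow> 'a \<Rightarrow> real"
  assumes indep: "indep_vars (\<lambda>_. borel) X UNIV"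
    and int1: "\<And>j. integrable M (X j)" and int2: "\<And>j. integrable M (\<lambda>\<omega>. (X j \<omega>)\<^sup>2)"
    and mean: "\<And>j. expectation (X j) = 0" and lam: "0 \<le> lam" and k: "m \<le> k" "k \<le> N"
  defines "T \<equiv> \<lambda>k \<omega>. \<Sum>j\<in>{m..<k}. X j \<omega>"
  defines "H \<equiv> \<lambda>\<omega>. of_bool (lam \<le> \<bar>T k \<omega>\<bar> \<and> (\<forall>i\<in>{m..<k}. \<not> lam \<le> \<bar>T i \<omega>\<bar>)) :: real"
  shows "lam\<^sup>2 * expectation H \<le> expectation (\<lambda>\<omega>. (T N \<omega>)\<^sup>2 * H \<omega>)"
proof -
  have [measurable]: "X j \<in> borel_measurable M" for j using int1 by auto
  have [measurable]: "T i \<in> borel_measurable M" for i unfolding T_def by measurable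
  have [measurable]: "H \<in> borel_measurable M" unfolding H_def by measurable
  have H01: "H \<omega> = 0 \<or> H \<omega> = 1" for \<omega> unfolding H_def by (simp add: of_bool_def)
  have T_sq: "integrable M (\<lambda>\<omega>. (T i \<omega>)\<^sup>2)" for i
    using expectation_sum_sq_indep[OF indep, of "{m..<i}"] int1 int2 mean by (simp add: T_def)
  have T_int: "integrable M (T k)" unfolding T_def using int1 by auto
  define V where "V = (\<lambda>\<omega>. \<Sum>j\<in>{k..<N}. X j \<omega>)"
  define U where "U = (\<lambda>\<omega>. T k \<omega> * H \<omega>)"
  have split: "T N \<omega> = T k \<omega> + V \<omega>" for \<omega>
    unfolding T_def V_def using k by (simp add: sum.atLeastLessThan_concat)
  have "indep_var borel U borel V"
    unfolding U_def V_def H_def T_def using indep_var_first_exceedance[OF indep k] by simp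
  moreover have "integrable M U"
    unfolding U_def by (rule Bochner_Integration.integrable_bound[OF T_int]) (auto simp: H_def)
  moreover have "integrable M V" "expectation V = 0" unfolding V_def using int1 mean by auto
  ultimately have UV: "integrable M (\<lambda>\<omega>. U \<omega> * V \<omega>)" "expectation (\<lambda>\<omega>. U \<omega> * V \<omega>) = 0"
    by (simp_all add: indep_var_integrable indep_var_lebesgue_integral)
  have TH: "integrable M (\<lambda>\<omega>. (T i \<omega>)\<^sup>2 * H \<omega>)" for i
    by (rule Bochner_Integration.integrable_bound[OF T_sq[of i]]) (auto simp: H_def)
  have "lam\<^sup>2 * expectation H = expectation (\<lambda>\<omega>. lam\<^sup>2 * H \<omega>)" by simp
  also have "\<dots> \<le> expectation (\<lambda>\<omega>. (T k \<omega>)\<^sup>2 * H \<omega>)"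
  proof (rule integral_mono)
    show "integrable M (\<lambda>\<omega>. lam\<^sup>2 * H \<omega>)"
      by (rule Bochner_Integration.integrable_bound[of _ "\<lambda>_. lam\<^sup>2"]) (auto simp: H_def)
    show "lam\<^sup>2 * H \<omega> \<le> (T k \<omega>)\<^sup>2 * H \<omega>" for \<omega>
      using power_mono[of lam "\<bar>T k \<omega>\<bar>" 2] lam by (auto simp: H_def)
  qed (rule TH)
  also have "\<dots> = expectation (\<lambda>\<omega>. (T k \<omega>)\<^sup>2 * H \<omega> + 2 * (U \<omega> * V \<omega>))"
    using TH UV by simp
  also have "\<dots> \<le> expectation (\<lambda>\<omega>. (T N \<omega>)\<^sup>2 * H \<omega>)"
  proof (rule integral_mono)
    show "(T k \<omega>)\<^sup>2 * H \<omega> + 2 * (U \<omega> * V \<omega>) \<le> (T N \<omega>)\<^sup>2 * H \<omega>" for \<omega>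
      using H01[of \<omega>] unfolding split U_def by (auto simp: power2_sum)
  qed (use TH UV in auto)
  finally show ?thesis .
qed

lemma (in prob_space) prob_eq_expectation_of_bool:
  assumes "{\<omega>\<in>space M. P \<omega>} \<in> events"
  shows "prob {\<omega>\<in>space M. P \<omega>} = expectation (\<lambda>\<omega>. of_bool (P \<omega>))"
proof -
  have "prob {\<omega>\<in>space M. P \<omega>} = expectation (indicator {\<omega>\<in>space M. P \<omega>})"
    using assms by simp
  also have "\<dots> = expectation (\<lambda>\<omega>. of_bool (P \<omega>))"
    by (intro Bochner_Integration.integral_cong) (auto simp: indicator_def)
  finally show ?thesis .
qed

lemma (in prob_space) kolmogorov_maximal_inequality:
  fixes X :: "nat \<Rightarrow> 'a \<Rightarrow> real"
  assumes indep: "indep_vars (\<lambda>_. borel) X UNIV"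
    and int1: "\<And>j. integrable M (X j)" and int2: "\<And>j. integrable M (\<lambda>\<omega>. (X j \<omega>)\<^sup>2)"
    and mean: "\<And>j. expectation (X j) = 0" and lam: "0 \<le> lam" and "m \<le> N"
  shows "lam\<^sup>2 * prob {\<omega>\<in>space M. \<exists>k\<in>{m..N}. lam \<le> \<bar>\<Sum>j\<in>{m..<k}. X j \<omega>\<bar>}
    \<le> (\<Sum>j\<in>{m..<N}. expectation (\<lambda>\<omega>. (X j \<omega>)\<^sup>2))"
proof -
  define T where "T k \<omega> = (\<Sum>j\<in>{m..<k}. X j \<omega>)" for k \<omega>
  define H where "H k \<omega> = (of_bool (lam \<le> \<bar>T k \<omega>\<bar> \<and> (\<forall>i\<in>{m..<k}. \<not> lam \<le> \<bar>T i \<omega>\<bar>)) :: real)"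
    for k \<omega>
  have [measurable]: "X j \<in> borel_measurable M" for j using int1 by auto
  have [measurable]: "T k \<in> borel_measurable M" for k unfolding T_def by measurable
  have [measurable]: "H k \<in> borel_measurable M" for k unfolding H_def by measurable
  have H_int: "integrable M (H k)" for k
    by (rule Bochner_Integration.integrable_bound[of _ "\<lambda>_. 1::real"]) (auto simp: H_def)
  have T_sq: "integrable M (\<lambda>\<omega>. (T N \<omega>)\<^sup>2)"
    "expectation (\<lambda>\<omega>. (T N \<omega>)\<^sup>2) = (\<Sum>j\<in>{m..<N}. expectation (\<lambda>\<omega>. (X j \<omega>)\<^sup>2))"
    using expectation_sum_sq_indep[OF indep, of "{m..<N}"] int1 int2 mean by (simp_all add: T_def)
  have TH: "integrable M (\<lambda>\<omega>. (T N \<omega>)\<^sup>2 * H k \<omega>)" for k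
    by (rule Bochner_Integration.integrable_bound[OF T_sq(1)]) (auto simp: H_def)
  have first: "of_bool (\<exists>k\<in>{m..N}. lam \<le> \<bar>T k \<omega>\<bar>) = (\<Sum>k\<in>{m..N}. H k \<omega>)" for \<omega>
    unfolding H_def by (rule of_bool_ex_eq_sum_first)
  have "prob {\<omega>\<in>space M. \<exists>k\<in>{m..N}. lam \<le> \<bar>T k \<omega>\<bar>}
      = expectation (\<lambda>\<omega>. of_bool (\<exists>k\<in>{m..N}. lam \<le> \<bar>T k \<omega>\<bar>))"
    by (rule prob_eq_expectation_of_bool) measurable
  also have "\<dots> = (\<Sum>k\<in>{m..N}. expectation (H k))"
    unfolding first using H_int by simp
  finally have "lam\<^sup>2 * prob {\<omega>\<in>space M. \<exists>k\<in>{m..N}. lam \<le> \<bar>T k \<omega>\<bar>}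
      = (\<Sum>k\<in>{m..N}. lam\<^sup>2 * expectation (H k))"
    by (simp add: sum_distrib_left)
  also have "\<dots> \<le> (\<Sum>k\<in>{m..N}. expectation (\<lambda>\<omega>. (T N \<omega>)\<^sup>2 * H k \<omega>))"
    unfolding T_def H_def
    by (intro sum_mono kolmogorov_first_exceedance[OF indep int1 int2 mean lam]) auto
  also have "\<dots> = expectation (\<lambda>\<omega>. \<Sum>k\<in>{m..N}. (T N \<omega>)\<^sup>2 * H k \<omega>)"
    using TH by (simp add: Bochner_Integration.integral_sum)
  also have "\<dots> = expectation (\<lambda>\<omega>. (T N \<omega>)\<^sup>2 * of_bool (\<exists>k\<in>{m..N}. lam \<le> \<bar>T k \<omega>\<bar>))"
    by (simp add: first sum_distrib_left)
  also have "\<dots> \<le> expectation (\<lambda>\<omega>. (T N \<omega>)\<^sup>2)"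
  proof (rule integral_mono)
    show "integrable M (\<lambda>\<omega>. (T N \<omega>)\<^sup>2 * of_bool (\<exists>k\<in>{m..N}. lam \<le> \<bar>T k \<omega>\<bar>))"
      by (rule Bochner_Integration.integrable_bound[OF T_sq(1)]) auto
  qed (auto simp: T_sq(1))
  also have "\<dots> = (\<Sum>j\<in>{m..<N}. expectation (\<lambda>\<omega>. (X j \<omega>)\<^sup>2))" by (rule T_sq(2))
  finally show ?thesis unfolding T_def .
qed

lemma summable_if_tail_sums_small:
  fixes x :: "nat \<Rightarrow> real"
  assumes "\<And>n. \<exists>m. \<forall>k\<ge>m. \<bar>\<Sum>j\<in>{m..<k}. x j\<bar> < inverse (real (Suc n))"
  shows "summable x"
proof (rule summable_Cauchy[THEN iffD2], intro allI impI)
  fix e :: real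
  assume "0 < e"
  then obtain n where n: "inverse (real (Suc n)) < e / 2" using reals_Archimedean[of "e / 2"] by auto
  from assms[of n] obtain m where m: "\<And>k. m \<le> k \<Longrightarrow> \<bar>\<Sum>j\<in>{m..<k}. x j\<bar> < inverse (real (Suc n))"
    by blast
  have "norm (sum x {a..<b}) < e" if "m \<le> a" for a b
  proof (cases "a \<le> b")
    case True
    then have "sum x {a..<b} = sum x {m..<b} - sum x {m..<a}"
      using that by (simp add: sum_diff_nat_ivl)
    moreover have "\<bar>sum x {m..<b}\<bar> < e / 2" "\<bar>sum x {m..<a}\<bar> < e / 2"
      using m[of a] m[of b] that True n by linarith+
    ultimately show ?thesis by simp
  next
    case False
    then show ?thesis using \<open>0 < e\<close> by simp
  qed
  then show "\<exists>N. \<forall>a\<ge>N. \<forall>b. norm (sum x {a..<b}) < e" by blast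
qed

lemma (in prob_space) prob_partial_sums_exceed_le:
  fixes X :: "nat \<Rightarrow> 'a \<Rightarrow> real"
  assumes indep: "indep_vars (\<lambda>_. borel) X UNIV"
    and int1: "\<And>j. integrable M (X j)" and int2: "\<And>j. integrable M (\<lambda>\<omega>. (X j \<omega>)\<^sup>2)"
    and mean: "\<And>j. expectation (X j) = 0"
    and summable: "summable (\<lambda>j. expectation (\<lambda>\<omega>. (X j \<omega>)\<^sup>2))" and eps: "0 < eps"
  shows "prob {\<omega>\<in>space M. \<exists>k\<ge>m. eps \<le> \<bar>\<Sum>j\<in>{m..<k}. X j \<omega>\<bar>}
    \<le> (\<Sum>i. expectation (\<lambda>\<omega>. (X (i + m) \<omega>)\<^sup>2)) / eps\<^sup>2"
proof -
  define v where "v j = expectation (\<lambda>\<omega>. (X j \<omega>)\<^sup>2)" for j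
  have [measurable]: "X j \<in> borel_measurable M" for j using int1 by auto
  define B where "B d = {\<omega>\<in>space M. \<exists>k\<in>{m..m + d}. eps \<le> \<bar>\<Sum>j\<in>{m..<k}. X j \<omega>\<bar>}" for d
  have "B d \<in> events" for d unfolding B_def by measurable
  then have "range B \<subseteq> events" by auto
  moreover have "incseq B" unfolding B_def incseq_def by force
  ultimately have lim: "(\<lambda>d. prob (B d)) \<longlonglongrightarrow> prob (\<Union>d. B d)"
    by (rule finite_Lim_measure_incseq)
  have "prob (B d) \<le> (\<Sum>i. v (i + m)) / eps\<^sup>2" for d
  proof -
    have "eps\<^sup>2 * prob (B d) \<le> (\<Sum>j\<in>{m..<m + d}. v j)"
      unfolding B_def v_def using eps by (intro kolmogorov_maximal_inequality[OF indep int1 int2 mean]) auto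
    also have "\<dots> = (\<Sum>i<d. v (i + m))"
      by (rule sum.reindex_bij_witness[where j="\<lambda>j. j - m" and i="\<lambda>i. i + m"]) auto
    also have "\<dots> \<le> (\<Sum>i. v (i + m))"
      using summable_ignore_initial_segment[OF summable[folded v_def], of m]
      by (intro sum_le_suminf) (auto simp: v_def)
    finally show ?thesis using eps by (simp add: field_simps)
  qed
  then have "prob (\<Union>d. B d) \<le> (\<Sum>i. v (i + m)) / eps\<^sup>2"
    by (intro LIMSEQ_le_const2[OF lim]) auto
  moreover have "(\<Union>d. B d) = {\<omega>\<in>space M. \<exists>k\<ge>m. eps \<le> \<bar>\<Sum>j\<in>{m..<k}. X j \<omega>\<bar>}"
    unfolding B_def by (auto, metis le_add_diff_inverse atLeastAtMost_iff order_refl)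
  ultimately show ?thesis by (simp add: v_def)
qed

lemma (in prob_space) AE_summable_indep:
  fixes X :: "nat \<Rightarrow> 'a \<Rightarrow> real"
  assumes indep: "indep_vars (\<lambda>_. borel) X UNIV"
    and int1: "\<And>j. integrable M (X j)" and int2: "\<And>j. integrable M (\<lambda>\<omega>. (X j \<omega>)\<^sup>2)"
    and mean: "\<And>j. expectation (X j) = 0"
    and summable: "summable (\<lambda>j. expectation (\<lambda>\<omega>. (X j \<omega>)\<^sup>2))"
  shows "AE \<omega> in M. summable (\<lambda>j. X j \<omega>)"
proof -
  have [measurable]: "X j \<in> borel_measurable M" for j using int1 by auto
  have "AE \<omega> in M. \<exists>m. \<forall>k\<ge>m. \<bar>\<Sum>j\<in>{m..<k}. X j \<omega>\<bar> < eps" if eps: "0 < eps" for eps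
  proof -
    define C where "C = {\<omega>\<in>space M. \<forall>m. \<exists>k\<ge>m. eps \<le> \<bar>\<Sum>j\<in>{m..<k}. X j \<omega>\<bar>}"
    have C: "C \<in> events" unfolding C_def by measurable
    have "prob C \<le> (\<Sum>i. expectation (\<lambda>\<omega>. (X (i + m) \<omega>)\<^sup>2)) / eps\<^sup>2" for m
    proof -
      have "prob C \<le> prob {\<omega>\<in>space M. \<exists>k\<ge>m. eps \<le> \<bar>\<Sum>j\<in>{m..<k}. X j \<omega>\<bar>}"
        by (rule finite_measure_mono) (auto simp: C_def)
      also have "\<dots> \<le> (\<Sum>i. expectation (\<lambda>\<omega>. (X (i + m) \<omega>)\<^sup>2)) / eps\<^sup>2"
        by (rule prob_partial_sums_exceed_le[OF indep int1 int2 mean summable eps])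
      finally show ?thesis .
    qed
    moreover have "(\<lambda>m. (\<Sum>i. expectation (\<lambda>\<omega>. (X (i + m) \<omega>)\<^sup>2)) / eps\<^sup>2) \<longlonglongrightarrow> 0 / eps\<^sup>2"
      by (intro tendsto_divide suminf_exist_split2[OF summable] tendsto_const) (use eps in auto)
    ultimately have "prob C \<le> 0" by (intro LIMSEQ_le_const) auto
    then have "emeasure M C = 0" by (simp add: emeasure_eq_measure measure_le_0_iff)
    then show ?thesis
      by (subst AE_iff_measurable[OF C]) (auto simp: C_def not_less)
  qed
  then have "AE \<omega> in M. \<forall>n. \<exists>m. \<forall>k\<ge>m. \<bar>\<Sum>j\<in>{m..<k}. X j \<omega>\<bar> < inverse (real (Suc n))"
    by (subst AE_all_countable) auto
  then show ?thesis by eventually_elim (rule summable_if_tail_sums_small, blast)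
qed

section \<open>Moments of weighted sums of independent centred variables\<close>

lemma sq_le_one_plus_abs_powr:
  fixes x p :: real
  assumes "2 \<le> p"
  shows "x\<^sup>2 \<le> 1 + \<bar>x\<bar> powr p"
proof (cases "\<bar>x\<bar> \<le> 1")
  case True
  then show ?thesis using abs_square_le_1[of x] powr_ge_zero[of "\<bar>x\<bar>" p] by linarith
next
  case False
  have "x\<^sup>2 = \<bar>x\<bar> powr 2" by simp
  also have "\<dots> \<le> \<bar>x\<bar> powr p" using False assms by (intro powr_mono) auto
  finally show ?thesis by linarith
qed

lemma (in prob_space) indep_var_compose_expectation:
  fixes S Y :: "'a \<Rightarrow> real" and F G :: "real \<Rightarrow> real"
  assumes indep: "indep_var borel S borel Y"
    and [measurable]: "F \<in> borel_measurable borel" "G \<in> borel_measurable borel"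
    and F: "integrable M (\<lambda>\<omega>. F (S \<omega>))" and G: "integrable M (\<lambda>\<omega>. G (Y \<omega>))"
  shows "integrable M (\<lambda>\<omega>. F (S \<omega>) * G (Y \<omega>))"
    and "expectation (\<lambda>\<omega>. F (S \<omega>) * G (Y \<omega>)) = expectation (\<lambda>\<omega>. F (S \<omega>)) * expectation (\<lambda>\<omega>. G (Y \<omega>))"
proof -
  have "indep_var borel (\<lambda>\<omega>. F (S \<omega>)) borel (\<lambda>\<omega>. G (Y \<omega>))"
    using indep_var_compose[OF indep, of F borel G borel] by (simp add: comp_def)
  then show "integrable M (\<lambda>\<omega>. F (S \<omega>) * G (Y \<omega>))"
    and "expectation (\<lambda>\<omega>. F (S \<omega>) * G (Y \<omega>)) = expectation (\<lambda>\<omega>. F (S \<omega>)) * expectation (\<lambda>\<omega>. G (Y \<omega>))"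
    using F G by (simp_all add: indep_var_integrable indep_var_lebesgue_integral)
qed

lemma integrable_bracket_powr_deriv:
  assumes "integrable M (\<lambda>\<omega>. bracket_powr p (S \<omega>))" "S \<in> borel_measurable M" "0 \<le> p"
  shows "integrable M (\<lambda>\<omega>. bracket_powr_deriv p (S \<omega>))"
  using abs_bracket_powr_deriv_le[OF assms(3)] assms
  by (intro Bochner_Integration.integrable_bound[OF integrable_mult_right[OF assms(1), of p]])
     (auto simp: abs_mult)

text \<open>The first-order term of the Taylor expansion has mean zero by independence, and the remainder
  factorises into \<open>\<bbbE>\<psi>(S)\<close> times a moment of \<open>Y\<close>.\<close>

lemma (in prob_space) expectation_bracket_powr_add_le:
  fixes S Y :: "'a \<Rightarrow> real"
  assumes indep: "indep_var borel S borel Y" and p: "2 \<le> p" and c: "\<bar>c\<bar> \<le> A"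
    and Y: "integrable M Y" "expectation Y = 0" "integrable M (\<lambda>\<omega>. \<bar>Y \<omega>\<bar> powr p)"
    and moment: "expectation (\<lambda>\<omega>. \<bar>Y \<omega>\<bar> powr p) \<le> mp"
    and S: "integrable M (\<lambda>\<omega>. bracket_powr p (S \<omega>))"
  shows "integrable M (\<lambda>\<omega>. bracket_powr p (S \<omega> + c * Y \<omega>))"
    and "expectation (\<lambda>\<omega>. bracket_powr p (S \<omega> + c * Y \<omega>))
      \<le> expectation (\<lambda>\<omega>. bracket_powr p (S \<omega>)) * (1 + bracket_taylor_const p A * (1 + mp) * c\<^sup>2)"
proof -
  have [measurable]: "S \<in> borel_measurable M" "Y \<in> borel_measurable M"
    using indep_var_rv1[OF indep] indep_var_rv2[OF indep] by auto
  define K where "K = bracket_taylor_const p A"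
  define R where "R = (\<lambda>\<omega>. bracket_powr p (S \<omega>) + c * (bracket_powr_deriv p (S \<omega>) * Y \<omega>)
    + K * c\<^sup>2 * (bracket_powr p (S \<omega>) * (1 + \<bar>Y \<omega>\<bar> powr p)))"
  have deriv: "integrable M (\<lambda>\<omega>. bracket_powr_deriv p (S \<omega>))"
    using S p by (intro integrable_bracket_powr_deriv) auto
  have id_meas: "(\<lambda>y::real. y) \<in> borel_measurable borel" by measurable
  have moment_meas: "(\<lambda>y. 1 + \<bar>y\<bar> powr p) \<in> borel_measurable borel" by measurable
  have Y1: "integrable M (\<lambda>\<omega>. 1 + \<bar>Y \<omega>\<bar> powr p)" using Y(3) by simp
  note cross = indep_var_compose_expectation[OF indep bracket_powr_deriv_measurable id_meas deriv Y(1)]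
  note prod = indep_var_compose_expectation[OF indep bracket_powr_measurable moment_meas S Y1]
  have "expectation (\<lambda>\<omega>. 1 + \<bar>Y \<omega>\<bar> powr p) = 1 + expectation (\<lambda>\<omega>. \<bar>Y \<omega>\<bar> powr p)"
    using Y(3) by (simp add: prob_space)
  then have R: "integrable M R" "expectation R = expectation (\<lambda>\<omega>. bracket_powr p (S \<omega>))
      + K * c\<^sup>2 * (expectation (\<lambda>\<omega>. bracket_powr p (S \<omega>)) * (1 + expectation (\<lambda>\<omega>. \<bar>Y \<omega>\<bar> powr p)))"
    unfolding R_def using S cross prod Y(2) by simp_all
  have pointwise: "bracket_powr p (S \<omega> + c * Y \<omega>) \<le> R \<omega>" for \<omega>
    unfolding R_def K_def by (rule bracket_powr_add_mult_le[OF p c])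
  show int: "integrable M (\<lambda>\<omega>. bracket_powr p (S \<omega> + c * Y \<omega>))"
    using pointwise bracket_powr_pos[of p]
    by (intro Bochner_Integration.integrable_bound[OF R(1)]) (auto intro: order_trans[OF _ abs_ge_self])
  have "0 \<le> K" unfolding K_def using p by (intro bracket_taylor_const_nonneg) simp
  then have "K * c\<^sup>2 * (1 + expectation (\<lambda>\<omega>. \<bar>Y \<omega>\<bar> powr p)) \<le> K * c\<^sup>2 * (1 + mp)"
    using moment by (intro mult_left_mono) auto
  moreover have "0 \<le> expectation (\<lambda>\<omega>. bracket_powr p (S \<omega>))"
    using bracket_powr_pos[of p] by (intro integral_nonneg_AE) (simp add: less_imp_le)
  ultimately have "expectation (\<lambda>\<omega>. bracket_powr p (S \<omega>)) * (K * c\<^sup>2 * (1 + expectation (\<lambda>\<omega>. \<bar>Y \<omega>\<bar> powr p)))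
      \<le> expectation (\<lambda>\<omega>. bracket_powr p (S \<omega>)) * (K * c\<^sup>2 * (1 + mp))"
    by (rule mult_left_mono)
  then have "expectation R \<le> expectation (\<lambda>\<omega>. bracket_powr p (S \<omega>)) * (1 + K * (1 + mp) * c\<^sup>2)"
    unfolding R(2) by (simp add: algebra_simps)
  with integral_mono[OF int R(1) pointwise]
  show "expectation (\<lambda>\<omega>. bracket_powr p (S \<omega> + c * Y \<omega>))
      \<le> expectation (\<lambda>\<omega>. bracket_powr p (S \<omega>)) * (1 + bracket_taylor_const p A * (1 + mp) * c\<^sup>2)"
    unfolding K_def by (rule order_trans)
qed

locale indep_centered_seq = prob_space +
  fixes Z :: "nat \<Rightarrow> 'a \<Rightarrow> real" and p mp :: real
  assumes indep_Z: "indep_vars (\<lambda>_. borel) Z UNIV"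
    and integrable_Z: "\<And>j. integrable M (Z j)"
    and expectation_Z: "\<And>j. expectation (Z j) = 0"
    and integrable_moment: "\<And>j. integrable M (\<lambda>\<omega>. \<bar>Z j \<omega>\<bar> powr p)"
    and moment_le: "\<And>j. expectation (\<lambda>\<omega>. \<bar>Z j \<omega>\<bar> powr p) \<le> mp"
    and two_le_p: "2 \<le> p"
begin

lemma Z_measurable [measurable]: "Z j \<in> borel_measurable M"
  using integrable_Z by (rule borel_measurable_integrable)

lemma moment_bound_nonneg: "0 \<le> mp"
proof -
  have "0 \<le> expectation (\<lambda>\<omega>. \<bar>Z 0 \<omega>\<bar> powr p)" by (intro integral_nonneg_AE) simp
  then show ?thesis using moment_le[of 0] by linarith
qed

lemma integrable_sq_Z: "integrable M (\<lambda>\<omega>. (Z j \<omega>)\<^sup>2)"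
proof (rule Bochner_Integration.integrable_bound)
  show "integrable M (\<lambda>\<omega>. 1 + \<bar>Z j \<omega>\<bar> powr p)" using integrable_moment[of j] by simp
  show "AE \<omega> in M. norm ((Z j \<omega>)\<^sup>2) \<le> norm (1 + \<bar>Z j \<omega>\<bar> powr p)"
    using sq_le_one_plus_abs_powr[OF two_le_p] by (intro AE_I2) simp
qed measurable

lemma expectation_sq_Z_le: "expectation (\<lambda>\<omega>. (Z j \<omega>)\<^sup>2) \<le> 1 + mp"
proof -
  have "expectation (\<lambda>\<omega>. (Z j \<omega>)\<^sup>2) \<le> expectation (\<lambda>\<omega>. 1 + \<bar>Z j \<omega>\<bar> powr p)"
    using integrable_moment[of j] sq_le_one_plus_abs_powr[OF two_le_p]
    by (intro integral_mono integrable_sq_Z) simp_all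
  also have "\<dots> = 1 + expectation (\<lambda>\<omega>. \<bar>Z j \<omega>\<bar> powr p)"
    using integrable_moment[of j] by (simp add: prob_space)
  finally show ?thesis using moment_le[of j] by linarith
qed

lemma AE_summable_weighted_sum:
  assumes c: "summable (\<lambda>j. (c j)\<^sup>2)"
  shows "AE \<omega> in M. summable (\<lambda>j. c j * Z j \<omega>)"
proof (rule AE_summable_indep)
  show "indep_vars (\<lambda>_. borel) (\<lambda>j \<omega>. c j * Z j \<omega>) UNIV"
    using indep_vars_compose2[OF indep_Z, of "\<lambda>j z. c j * z" "\<lambda>_. borel"] by simp
  have "norm (expectation (\<lambda>\<omega>. (c j * Z j \<omega>)\<^sup>2)) \<le> (c j)\<^sup>2 * (1 + mp)" for j
  proof -
    have "expectation (\<lambda>\<omega>. (c j * Z j \<omega>)\<^sup>2) = (c j)\<^sup>2 * expectation (\<lambda>\<omega>. (Z j \<omega>)\<^sup>2)"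
      by (simp add: power_mult_distrib)
    moreover have "0 \<le> expectation (\<lambda>\<omega>. (Z j \<omega>)\<^sup>2)" by (intro integral_nonneg_AE) simp
    ultimately show ?thesis using expectation_sq_Z_le[of j] by (simp add: mult_left_mono)
  qed
  then show "summable (\<lambda>j. expectation (\<lambda>\<omega>. (c j * Z j \<omega>)\<^sup>2))"
    by (intro summable_comparison_test[OF _ summable_mult2[OF c]]) blast
qed (simp_all add: integrable_Z expectation_Z integrable_sq_Z power_mult_distrib)

lemma bracket_powr_partial_sum_le:
  assumes c: "\<And>j. \<bar>c j\<bar> \<le> A"
  shows "integrable M (\<lambda>\<omega>. bracket_powr p (\<Sum>j<N. c j * Z j \<omega>)) \<and>
    expectation (\<lambda>\<omega>. bracket_powr p (\<Sum>j<N. c j * Z j \<omega>))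
      \<le> (\<Prod>j<N. 1 + bracket_taylor_const p A * (1 + mp) * (c j)\<^sup>2)"
proof (induction N)
  case 0
  then show ?case by (simp add: bracket_powr_def prob_space)
next
  case (Suc N)
  define S where "S = (\<lambda>\<omega>. \<Sum>j<N. c j * Z j \<omega>)"
  define K where "K = bracket_taylor_const p A * (1 + mp)"
  have indep: "indep_var borel S borel (Z N)"
    unfolding S_def by (rule indep_var_weighted_sum_single[OF indep_Z]) auto
  have IH: "integrable M (\<lambda>\<omega>. bracket_powr p (S \<omega>))"
    "expectation (\<lambda>\<omega>. bracket_powr p (S \<omega>)) \<le> (\<Prod>j<N. 1 + K * (c j)\<^sup>2)"
    using Suc.IH by (simp_all add: S_def K_def)
  note step = expectation_bracket_powr_add_le[OF indep two_le_p c[of N] integrable_Z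
      expectation_Z integrable_moment moment_le IH(1), folded K_def]
  have "0 \<le> K" unfolding K_def using two_le_p moment_bound_nonneg bracket_taylor_const_nonneg[of p A] by simp
  then have "expectation (\<lambda>\<omega>. bracket_powr p (S \<omega> + c N * Z N \<omega>))
      \<le> (\<Prod>j<N. 1 + K * (c j)\<^sup>2) * (1 + K * (c N)\<^sup>2)"
    using IH by (intro order_trans[OF step(2)] mult_right_mono) auto
  moreover have "(\<Sum>j<Suc N. c j * Z j \<omega>) = S \<omega> + c N * Z N \<omega>" for \<omega>
    by (simp add: S_def)
  ultimately show ?case using step(1) by (simp add: K_def)
qed

lemma nn_integral_bracket_powr_partial_sum_le:
  assumes c: "\<And>j. \<bar>c j\<bar> \<le> A" "summable (\<lambda>j. (c j)\<^sup>2)"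
  shows "(\<integral>\<^sup>+\<omega>. ennreal (bracket_powr p (\<Sum>j<n. c j * Z j \<omega>)) \<partial>M)
    \<le> ennreal (exp (bracket_taylor_const p A * (1 + mp) * (\<Sum>j. (c j)\<^sup>2)))"
proof -
  define K where "K = bracket_taylor_const p A * (1 + mp)"
  have K: "0 \<le> K"
    unfolding K_def using two_le_p moment_bound_nonneg bracket_taylor_const_nonneg[of p A] by simp
  have moment: "integrable M (\<lambda>\<omega>. bracket_powr p (\<Sum>j<n. c j * Z j \<omega>)) \<and>
      expectation (\<lambda>\<omega>. bracket_powr p (\<Sum>j<n. c j * Z j \<omega>)) \<le> (\<Prod>j<n. 1 + K * (c j)\<^sup>2)"
    unfolding K_def by (rule bracket_powr_partial_sum_le) (rule c)
  have "(\<integral>\<^sup>+\<omega>. ennreal (bracket_powr p (\<Sum>j<n. c j * Z j \<omega>)) \<partial>M)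
      = expectation (\<lambda>\<omega>. bracket_powr p (\<Sum>j<n. c j * Z j \<omega>))"
    using moment bracket_powr_pos[of p] by (intro nn_integral_eq_integral) (auto intro: less_imp_le)
  also have "\<dots> \<le> (\<Prod>j<n. 1 + K * (c j)\<^sup>2)" using moment by (intro ennreal_leI) blast
  also have "\<dots> \<le> (\<Prod>j<n. exp (K * (c j)\<^sup>2))"
    using K by (intro ennreal_leI prod_mono) auto
  also have "\<dots> = exp (K * (\<Sum>j<n. (c j)\<^sup>2))" by (simp add: exp_sum sum_distrib_left)
  also have "\<dots> \<le> exp (K * (\<Sum>j. (c j)\<^sup>2))"
    using K c by (intro ennreal_leI exp_mono mult_left_mono sum_le_suminf) auto
  finally show ?thesis by (simp add: K_def)
qed

end

definition bracket_moment_bound :: "real \<Rightarrow> real \<Rightarrow> (nat \<Rightarrow> real) \<Rightarrow> real" where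
  "bracket_moment_bound p mp c =
     exp (bracket_taylor_const p (sqrt (\<Sum>j. (c j)\<^sup>2)) * (1 + mp) * (\<Sum>j. (c j)\<^sup>2))"

context indep_centered_seq
begin

lemma nn_integral_bracket_powr_weighted_sum_le:
  assumes c: "summable (\<lambda>j. (c j)\<^sup>2)"
  shows "(\<integral>\<^sup>+\<omega>. ennreal (bracket_powr p (\<Sum>j. c j * Z j \<omega>)) \<partial>M) \<le> ennreal (bracket_moment_bound p mp c)"
proof -
  have c_le: "\<bar>c j\<bar> \<le> sqrt (\<Sum>j. (c j)\<^sup>2)" for j
    using sum_le_suminf[OF c, of "{j}"] by (simp add: real_le_rsqrt)
  have "AE \<omega> in M. ennreal (bracket_powr p (\<Sum>j. c j * Z j \<omega>))
      = liminf (\<lambda>n. ennreal (bracket_powr p (\<Sum>j<n. c j * Z j \<omega>)))"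
    using AE_summable_weighted_sum[OF c]
  proof eventually_elim
    case (elim \<omega>)
    have "isCont (bracket_powr p) (\<Sum>j. c j * Z j \<omega>)"
      using bracket_powr_has_real_derivative by (rule DERIV_isCont)
    then have "(\<lambda>n. bracket_powr p (\<Sum>j<n. c j * Z j \<omega>)) \<longlonglongrightarrow> bracket_powr p (\<Sum>j. c j * Z j \<omega>)"
      using summable_LIMSEQ[OF elim] by (rule isCont_tendsto_compose)
    then show ?case by (intro lim_imp_Liminf[symmetric] tendsto_ennrealI) simp
  qed
  then have "(\<integral>\<^sup>+\<omega>. ennreal (bracket_powr p (\<Sum>j. c j * Z j \<omega>)) \<partial>M)
      = (\<integral>\<^sup>+\<omega>. liminf (\<lambda>n. ennreal (bracket_powr p (\<Sum>j<n. c j * Z j \<omega>))) \<partial>M)"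
    by (rule nn_integral_cong_AE)
  also have "\<dots> \<le> liminf (\<lambda>n. \<integral>\<^sup>+\<omega>. ennreal (bracket_powr p (\<Sum>j<n. c j * Z j \<omega>)) \<partial>M)"
    by (rule nn_integral_liminf) simp
  also have "\<dots> \<le> liminf (\<lambda>n. ennreal (bracket_moment_bound p mp c))"
    unfolding bracket_moment_bound_def
    using nn_integral_bracket_powr_partial_sum_le[OF c_le c] by (intro Liminf_mono) auto
  finally show ?thesis by (simp add: Liminf_const)
qed

lemma integrable_bracket_powr_weighted_sum:
  assumes "summable (\<lambda>j. (c j)\<^sup>2)"
  shows "integrable M (\<lambda>\<omega>. bracket_powr p (\<Sum>j. c j * Z j \<omega>))"
  using nn_integral_bracket_powr_weighted_sum_le[OF assms] bracket_powr_pos[of p]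
  by (intro integrableI_nonneg) (auto intro: less_imp_le order_le_less_trans)

lemma expectation_bracket_powr_weighted_sum_le:
  assumes "summable (\<lambda>j. (c j)\<^sup>2)"
  shows "expectation (\<lambda>\<omega>. bracket_powr p (\<Sum>j. c j * Z j \<omega>)) \<le> bracket_moment_bound p mp c"
proof -
  have "ennreal (expectation (\<lambda>\<omega>. bracket_powr p (\<Sum>j. c j * Z j \<omega>)))
      = (\<integral>\<^sup>+\<omega>. ennreal (bracket_powr p (\<Sum>j. c j * Z j \<omega>)) \<partial>M)"
    using integrable_bracket_powr_weighted_sum[OF assms] bracket_powr_pos[of p]
    by (intro nn_integral_eq_integral[symmetric]) (auto intro: less_imp_le)
  also have "\<dots> \<le> bracket_moment_bound p mp c"
    by (rule nn_integral_bracket_powr_weighted_sum_le[OF assms])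
  finally show ?thesis by (simp add: bracket_moment_bound_def)
qed

end

section \<open>Bounds on the distance \<open>\<rho>_w\<close>\<close>

lemma H_w_le:
  assumes gamma: "0 \<le> \<gamma>" and kappa: "integrable lborel (\<lambda>u. (f' u)\<^sup>2 * (1 + \<bar>u\<bar>) powr \<gamma>)"
  shows "H_w \<gamma> f' y \<le> (LINT u|lborel. (f' u)\<^sup>2 * (1 + \<bar>u\<bar>) powr \<gamma>) * (1 + \<bar>y\<bar>) powr \<gamma>"
proof -
  have "H_w \<gamma> f' y = (LINT x|lborel. (f' x)\<^sup>2 * (1 + \<bar>y + x\<bar>) powr \<gamma>)"
    unfolding H_w_def
    using lborel_integral_real_affine[of 1 "\<lambda>\<theta>. (f' (\<theta> - y))\<^sup>2 * (1 + \<bar>\<theta>\<bar>) powr \<gamma>" y] by simp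
  also have "\<dots> \<le> (LINT x|lborel. (1 + \<bar>y\<bar>) powr \<gamma> * ((f' x)\<^sup>2 * (1 + \<bar>x\<bar>) powr \<gamma>))"
  proof (rule integral_mono')
    show "integrable lborel (\<lambda>x. (1 + \<bar>y\<bar>) powr \<gamma> * ((f' x)\<^sup>2 * (1 + \<bar>x\<bar>) powr \<gamma>))"
      using kappa by (rule integrable_mult_right)
  next
    fix x :: real
    have "(1 + \<bar>y + x\<bar>) powr \<gamma> \<le> ((1 + \<bar>y\<bar>) * (1 + \<bar>x\<bar>)) powr \<gamma>"
      using gamma by (intro powr_mono2) (auto simp: algebra_simps abs_triangle_ineq[THEN order_trans])
    then show "(f' x)\<^sup>2 * (1 + \<bar>y + x\<bar>) powr \<gamma> \<le> (1 + \<bar>y\<bar>) powr \<gamma> * ((f' x)\<^sup>2 * (1 + \<bar>x\<bar>) powr \<gamma>)"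
      by (simp add: powr_mult mult.left_commute mult_left_mono)
  qed simp
  finally show ?thesis by (simp add: mult.commute)
qed

lemma abs_set_integral_Ioo_le:
  fixes g :: "real \<Rightarrow> real"
  assumes "u \<le> v" "0 \<le> B" "\<And>x. u < x \<Longrightarrow> x < v \<Longrightarrow> \<bar>g x\<bar> \<le> B"
  shows "\<bar>LINT x:{u<..<v}|lborel. g x\<bar> \<le> (v - u) * B"
proof -
  have "\<bar>LINT x:{u<..<v}|lborel. g x\<bar> \<le> (LINT x|lborel. norm (indicator {u<..<v} x *\<^sub>R g x))"
    unfolding set_lebesgue_integral_def using integral_norm_bound by (metis real_norm_def)
  also have "\<dots> \<le> (LINT x|lborel. indicator {u<..<v} x * B)"
  proof (rule integral_mono')
    show "integrable lborel (\<lambda>x. indicator {u<..<v} x * B)"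
      using assms(1) by (intro integrable_mult_left) (simp add: integrable_indicator_iff)
  qed (use assms in \<open>auto simp: indicator_def\<close>)
  also have "\<dots> = (v - u) * B" using assms by simp
  finally show ?thesis .
qed

lemma rho_w_le:
  assumes gamma: "0 \<le> \<gamma>" and kappa: "integrable lborel (\<lambda>u. (f' u)\<^sup>2 * (1 + \<bar>u\<bar>) powr \<gamma>)"
  shows "rho_w \<gamma> f' u v \<le> sqrt (LINT u|lborel. (f' u)\<^sup>2 * (1 + \<bar>u\<bar>) powr \<gamma>) * \<bar>v - u\<bar>
    * (1 + \<bar>u\<bar> + \<bar>v\<bar>) powr (\<gamma> / 2)"
proof -
  define \<kappa> where "\<kappa> = (LINT u|lborel. (f' u)\<^sup>2 * (1 + \<bar>u\<bar>) powr \<gamma>)"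
  define B where "B = sqrt \<kappa> * (1 + \<bar>u\<bar> + \<bar>v\<bar>) powr (\<gamma> / 2)"
  have "0 \<le> \<kappa>" unfolding \<kappa>_def by (intro integral_nonneg_AE) auto
  then have "0 \<le> B" by (simp add: B_def)
  have bound: "\<bar>sqrt (H_w \<gamma> f' y)\<bar> \<le> B" if "\<bar>y\<bar> \<le> \<bar>u\<bar> + \<bar>v\<bar>" for y
  proof -
    have "H_w \<gamma> f' y \<le> \<kappa> * (1 + \<bar>y\<bar>) powr \<gamma>" unfolding \<kappa>_def by (rule H_w_le[OF gamma kappa])
    also have "\<dots> \<le> \<kappa> * ((1 + \<bar>u\<bar> + \<bar>v\<bar>) powr (\<gamma> / 2))\<^sup>2"
      using that gamma \<open>0 \<le> \<kappa>\<close>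
      by (auto simp: powr_mult_base power2_eq_square powr_add[symmetric] intro!: mult_left_mono powr_mono2)
    finally have "sqrt (H_w \<gamma> f' y) \<le> sqrt (\<kappa> * ((1 + \<bar>u\<bar> + \<bar>v\<bar>) powr (\<gamma> / 2))\<^sup>2)"
      by (rule real_sqrt_le_mono)
    also have "\<dots> = B" by (simp add: B_def real_sqrt_mult)
    finally have "sqrt (H_w \<gamma> f' y) \<le> B" .
    moreover have "0 \<le> H_w \<gamma> f' y" unfolding H_w_def by (intro integral_nonneg_AE) auto
    ultimately show ?thesis by simp
  qed
  have "\<bar>LINT x:{min u v<..<max u v}|lborel. sqrt (H_w \<gamma> f' x)\<bar> \<le> (max u v - min u v) * B"
    using \<open>0 \<le> B\<close> bound by (intro abs_set_integral_Ioo_le) auto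
  moreover have "rho_w \<gamma> f' u v = \<bar>LINT x:{min u v<..<max u v}|lborel. sqrt (H_w \<gamma> f' x)\<bar>"
    unfolding rho_w_def interval_lebesgue_integral_def by (auto simp: min_def max_def)
  ultimately show ?thesis by (simp add: B_def \<kappa>_def mult_ac abs_if max_def min_def split: if_splits)
qed

lemma sq_mult_powr_le:
  fixes D W g :: real
  assumes W: "0 < W" and g: "0 \<le> g"
  shows "D\<^sup>2 * W powr g \<le> \<bar>D\<bar> powr (2 + g) + W powr (2 + g)"
proof (cases "\<bar>D\<bar> \<le> W")
  case True
  have "D\<^sup>2 * W powr g \<le> W\<^sup>2 * W powr g"
    using power_mono[OF True abs_ge_zero, of 2] by (intro mult_right_mono) auto
  also have "\<dots> = W powr (2 + g)" using W by (simp add: powr_add)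
  finally show ?thesis by (simp add: add_increasing)
next
  case False
  then have "D\<^sup>2 * W powr g \<le> D\<^sup>2 * \<bar>D\<bar> powr g"
    using W g by (intro mult_left_mono powr_mono2) auto
  also have "\<dots> = \<bar>D\<bar> powr (2 + g)" using False W by (simp add: powr_add)
  finally show ?thesis by (simp add: add_increasing2)
qed

lemma abs_diff_powr_le:
  fixes x y p :: real
  assumes p: "0 \<le> p"
  shows "\<bar>x - y\<bar> powr p \<le> 2 powr p * (\<bar>x\<bar> powr p + \<bar>y\<bar> powr p)"
proof -
  have "\<bar>x - y\<bar> \<le> 2 * max \<bar>x\<bar> \<bar>y\<bar>" by linarith
  then have "\<bar>x - y\<bar> powr p \<le> (2 * max \<bar>x\<bar> \<bar>y\<bar>) powr p" using p by (intro powr_mono2) auto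
  also have "\<dots> = 2 powr p * max \<bar>x\<bar> \<bar>y\<bar> powr p" by (simp add: powr_mult)
  also have "max \<bar>x\<bar> \<bar>y\<bar> powr p \<le> \<bar>x\<bar> powr p + \<bar>y\<bar> powr p" by (simp add: max_def)
  finally show ?thesis by simp
qed

lemma one_plus_abs_add_powr_le:
  fixes u v p :: real
  assumes p: "0 \<le> p"
  shows "(1 + \<bar>u\<bar> + \<bar>v\<bar>) powr p \<le> 3 powr p * (bracket_powr p u + bracket_powr p v)"
proof -
  define m where "m = max 1 (max \<bar>u\<bar> \<bar>v\<bar>)"
  have "1 + \<bar>u\<bar> + \<bar>v\<bar> \<le> 3 * m" unfolding m_def by linarith
  then have "(1 + \<bar>u\<bar> + \<bar>v\<bar>) powr p \<le> (3 * m) powr p" using p by (intro powr_mono2) auto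
  also have "\<dots> = 3 powr p * m powr p" by (simp add: powr_mult m_def)
  also have "m powr p \<le> bracket_powr p u + bracket_powr p v"
    using one_le_bracket_powr[OF p, of u] one_le_bracket_powr[OF p, of v]
      abs_powr_le_bracket_powr[OF p, of u] abs_powr_le_bracket_powr[OF p, of v]
    unfolding m_def by (auto simp: max_def)
  finally show ?thesis by simp
qed

lemma rho_w_sq_le:
  assumes gamma: "0 \<le> \<gamma>" and kappa: "integrable lborel (\<lambda>u. (f' u)\<^sup>2 * (1 + \<bar>u\<bar>) powr \<gamma>)"
    and diff: "v - u = a * (e1 - e0)"
  shows "(rho_w \<gamma> f' u v)\<^sup>2 \<le> (LINT u|lborel. (f' u)\<^sup>2 * (1 + \<bar>u\<bar>) powr \<gamma>) * a\<^sup>2 *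
     (2 powr (2 + \<gamma>) * (\<bar>e0\<bar> powr (2 + \<gamma>) + \<bar>e1\<bar> powr (2 + \<gamma>))
      + 3 powr (2 + \<gamma>) * (bracket_powr (2 + \<gamma>) u + bracket_powr (2 + \<gamma>) v))"
proof -
  define \<kappa> where "\<kappa> = (LINT u|lborel. (f' u)\<^sup>2 * (1 + \<bar>u\<bar>) powr \<gamma>)"
  define W where "W = 1 + \<bar>u\<bar> + \<bar>v\<bar>"
  define p where "p = 2 + \<gamma>"
  have "0 \<le> \<kappa>" unfolding \<kappa>_def by (intro integral_nonneg_AE) auto
  have "0 < W" by (simp add: W_def add_pos_nonneg)
  have W_sq: "(W powr (\<gamma> / 2))\<^sup>2 = W powr \<gamma>"
    by (simp add: power2_eq_square powr_add[symmetric])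
  have "(rho_w \<gamma> f' u v)\<^sup>2 \<le> (sqrt \<kappa> * \<bar>v - u\<bar> * W powr (\<gamma> / 2))\<^sup>2"
    unfolding \<kappa>_def W_def by (intro power_mono rho_w_le[OF gamma kappa]) (simp add: rho_w_def)
  also have "\<dots> = \<kappa> * a\<^sup>2 * ((e1 - e0)\<^sup>2 * W powr \<gamma>)"
    using \<open>0 \<le> \<kappa>\<close> W_sq by (simp add: diff power_mult_distrib)
  also have "\<dots> \<le> \<kappa> * a\<^sup>2 * (\<bar>e1 - e0\<bar> powr p + W powr p)"
    unfolding p_def using \<open>0 \<le> \<kappa>\<close> sq_mult_powr_le[OF \<open>0 < W\<close> gamma] by (intro mult_left_mono) auto
  also have "\<dots> \<le> \<kappa> * a\<^sup>2 * (2 powr p * (\<bar>e0\<bar> powr p + \<bar>e1\<bar> powr p)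
      + 3 powr p * (bracket_powr p u + bracket_powr p v))"
    using \<open>0 \<le> \<kappa>\<close> gamma abs_diff_powr_le[of p e1 e0] one_plus_abs_add_powr_le[of p u v]
    by (intro mult_left_mono add_mono) (auto simp: p_def W_def add.commute)
  finally show ?thesis by (simp add: \<kappa>_def p_def)
qed

lemma (in prob_space) L2sq_rho_w_le:
  fixes Y Y' e0 e1 :: "'a \<Rightarrow> real"
  assumes gamma: "0 \<le> \<gamma>" and kappa: "integrable lborel (\<lambda>u. (f' u)\<^sup>2 * (1 + \<bar>u\<bar>) powr \<gamma>)"
    and [measurable]: "Y \<in> borel_measurable M" "Y' \<in> borel_measurable M"
    and diff: "AE \<omega> in M. Y' \<omega> - Y \<omega> = a * (e1 \<omega> - e0 \<omega>)"
    and e0: "integrable M (\<lambda>\<omega>. \<bar>e0 \<omega>\<bar> powr (2 + \<gamma>))"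
    and e1: "integrable M (\<lambda>\<omega>. \<bar>e1 \<omega>\<bar> powr (2 + \<gamma>))"
    and Y: "integrable M (\<lambda>\<omega>. bracket_powr (2 + \<gamma>) (Y \<omega>))"
    and Y': "integrable M (\<lambda>\<omega>. bracket_powr (2 + \<gamma>) (Y' \<omega>))"
  shows "L2sq M (\<lambda>\<omega>. rho_w \<gamma> f' (Y \<omega>) (Y' \<omega>)) \<le> ennreal
    ((LINT u|lborel. (f' u)\<^sup>2 * (1 + \<bar>u\<bar>) powr \<gamma>) * a\<^sup>2 *
      (2 powr (2 + \<gamma>) * (expectation (\<lambda>\<omega>. \<bar>e0 \<omega>\<bar> powr (2 + \<gamma>))
                          + expectation (\<lambda>\<omega>. \<bar>e1 \<omega>\<bar> powr (2 + \<gamma>)))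
       + 3 powr (2 + \<gamma>) * (expectation (\<lambda>\<omega>. bracket_powr (2 + \<gamma>) (Y \<omega>))
                          + expectation (\<lambda>\<omega>. bracket_powr (2 + \<gamma>) (Y' \<omega>)))))"
proof -
  define \<kappa> where "\<kappa> = (LINT u|lborel. (f' u)\<^sup>2 * (1 + \<bar>u\<bar>) powr \<gamma>)"
  define G where "G = (\<lambda>\<omega>. 2 powr (2 + \<gamma>) * (\<bar>e0 \<omega>\<bar> powr (2 + \<gamma>) + \<bar>e1 \<omega>\<bar> powr (2 + \<gamma>))
    + 3 powr (2 + \<gamma>) * (bracket_powr (2 + \<gamma>) (Y \<omega>) + bracket_powr (2 + \<gamma>) (Y' \<omega>)))"
  have "0 \<le> \<kappa>" unfolding \<kappa>_def by (intro integral_nonneg_AE) auto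
  have G: "integrable M G" unfolding G_def using e0 e1 Y Y' by simp
  have G_nonneg: "0 \<le> G \<omega>" for \<omega>
    using bracket_powr_pos[of "2 + \<gamma>"] by (simp add: G_def less_imp_le)
  have "AE \<omega> in M. ennreal ((rho_w \<gamma> f' (Y \<omega>) (Y' \<omega>))\<^sup>2) \<le> ennreal (\<kappa> * a\<^sup>2 * G \<omega>)"
    using diff by eventually_elim (auto simp: \<kappa>_def G_def intro!: ennreal_leI rho_w_sq_le[OF gamma kappa])
  then have "L2sq M (\<lambda>\<omega>. rho_w \<gamma> f' (Y \<omega>) (Y' \<omega>)) \<le> (\<integral>\<^sup>+\<omega>. ennreal (\<kappa> * a\<^sup>2 * G \<omega>) \<partial>M)"
    unfolding L2sq_def by (rule nn_integral_mono_AE)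
  also have "\<dots> = ennreal (\<kappa> * a\<^sup>2 * expectation G)"
    using G G_nonneg \<open>0 \<le> \<kappa>\<close> by (subst nn_integral_eq_integral) auto
  finally show ?thesis using e0 e1 Y Y' by (simp add: \<kappa>_def G_def)
qed

section \<open>Resampling one innovation of a linear process\<close>

lemma suminf_diff_eq_single:
  fixes f g :: "nat \<Rightarrow> real"
  assumes "summable f" "summable g" "\<And>j. j \<noteq> n \<Longrightarrow> g j = f j"
  shows "suminf g - suminf f = g n - f n"
proof -
  have "(\<lambda>j. g j - f j) = (\<lambda>j. if j = n then g n - f n else 0)" using assms(3) by auto
  then show ?thesis
    using suminf_diff[OF assms(2,1)] sums_single[of n "\<lambda>_. g n - f n"] by (simp add: sums_iff)
qed

lemma L2sq_rho_w_resample_le: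
  assumes Z: "indep_centered_seq M Z (2 + \<gamma>) mp" and Z': "indep_centered_seq M Z' (2 + \<gamma>) mp"
    and resample: "\<And>j. j \<noteq> n \<Longrightarrow> Z' j = Z j"
    and gamma: "0 \<le> \<gamma>" and kappa: "integrable lborel (\<lambda>u. (f' u)\<^sup>2 * (1 + \<bar>u\<bar>) powr \<gamma>)"
    and c: "summable (\<lambda>j. (c j)\<^sup>2)"
  shows "L2sq M (\<lambda>\<omega>. rho_w \<gamma> f' (\<Sum>j. c j * Z j \<omega>) (\<Sum>j. c j * Z' j \<omega>))
    \<le> ennreal ((LINT u|lborel. (f' u)\<^sup>2 * (1 + \<bar>u\<bar>) powr \<gamma>) * (c n)\<^sup>2 *
        (2 powr (2 + \<gamma>) * (2 * mp) + 3 powr (2 + \<gamma>) * (2 * bracket_moment_bound (2 + \<gamma>) mp c)))"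
proof -
  interpret Z: indep_centered_seq M Z "2 + \<gamma>" mp by (rule Z)
  interpret Z': indep_centered_seq M Z' "2 + \<gamma>" mp by (rule Z')
  have "0 \<le> (LINT u|lborel. (f' u)\<^sup>2 * (1 + \<bar>u\<bar>) powr \<gamma>)" by (intro integral_nonneg_AE) auto
  have diff: "AE \<omega> in M. (\<Sum>j. c j * Z' j \<omega>) - (\<Sum>j. c j * Z j \<omega>) = c n * (Z' n \<omega> - Z n \<omega>)"
    using Z.AE_summable_weighted_sum[OF c] Z'.AE_summable_weighted_sum[OF c]
  proof eventually_elim
    case (elim \<omega>)
    then show ?case
      using suminf_diff_eq_single[of "\<lambda>j. c j * Z j \<omega>" "\<lambda>j. c j * Z' j \<omega>" n] resample
      by (simp add: right_diff_distrib)
  qed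
  have "L2sq M (\<lambda>\<omega>. rho_w \<gamma> f' (\<Sum>j. c j * Z j \<omega>) (\<Sum>j. c j * Z' j \<omega>))
      \<le> ennreal ((LINT u|lborel. (f' u)\<^sup>2 * (1 + \<bar>u\<bar>) powr \<gamma>) * (c n)\<^sup>2 *
        (2 powr (2 + \<gamma>) * (Z.expectation (\<lambda>\<omega>. \<bar>Z n \<omega>\<bar> powr (2 + \<gamma>))
                            + Z.expectation (\<lambda>\<omega>. \<bar>Z' n \<omega>\<bar> powr (2 + \<gamma>)))
         + 3 powr (2 + \<gamma>) * (Z.expectation (\<lambda>\<omega>. bracket_powr (2 + \<gamma>) (\<Sum>j. c j * Z j \<omega>))
                            + Z.expectation (\<lambda>\<omega>. bracket_powr (2 + \<gamma>) (\<Sum>j. c j * Z' j \<omega>)))))"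
    by (rule Z.L2sq_rho_w_le[OF gamma kappa _ _ diff Z.integrable_moment Z'.integrable_moment
        Z.integrable_bracket_powr_weighted_sum[OF c] Z'.integrable_bracket_powr_weighted_sum[OF c]])
      measurable
  also have "\<dots> \<le> ennreal ((LINT u|lborel. (f' u)\<^sup>2 * (1 + \<bar>u\<bar>) powr \<gamma>) * (c n)\<^sup>2 *
      (2 powr (2 + \<gamma>) * (2 * mp) + 3 powr (2 + \<gamma>) * (2 * bracket_moment_bound (2 + \<gamma>) mp c)))"
    using \<open>0 \<le> (LINT u|lborel. (f' u)\<^sup>2 * (1 + \<bar>u\<bar>) powr \<gamma>)\<close> Z.moment_le[of n] Z'.moment_le[of n]
      Z.expectation_bracket_powr_weighted_sum_le[OF c] Z'.expectation_bracket_powr_weighted_sum_le[OF c]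
    by (intro ennreal_leI mult_left_mono add_mono) auto
  finally show ?thesis .
qed

lemma (in prob_space) indep_centered_seq_reindex:
  fixes X :: "'i \<Rightarrow> 'a \<Rightarrow> real" and h :: "nat \<Rightarrow> 'i" and \<xi> :: "'a \<Rightarrow> real"
  assumes indep: "indep_vars (\<lambda>_. borel) X I" and h: "inj h" "range h \<subseteq> I"
    and X: "\<And>i. i \<in> I \<Longrightarrow> distributed M lborel (X i) (\<lambda>x. ennreal (f x))" and f: "\<And>x. 0 \<le> f x"
    and \<xi>: "distributed M lborel \<xi> (\<lambda>x. ennreal (f x))" "integrable M \<xi>" "expectation \<xi> = 0"
      "integrable M (\<lambda>\<omega>. \<bar>\<xi> \<omega>\<bar> powr p)"
    and p: "2 \<le> p"
  shows "indep_centered_seq M (\<lambda>j. X (h j)) p (expectation (\<lambda>\<omega>. \<bar>\<xi> \<omega>\<bar> powr p))"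
proof unfold_locales
  show "indep_vars (\<lambda>_. borel) (\<lambda>j. X (h j)) UNIV"
    using indep_vars_reindex[OF indep, of h UNIV] h by simp
  fix j
  have "distributed M lborel (X (h j)) (\<lambda>x. ennreal (f x))" using X h by auto
  note same = identically_distributed_integrable_iff[OF this \<xi>(1) f]
    identically_distributed_integral_eq[OF this \<xi>(1) f]
  show "integrable M (X (h j))" "expectation (X (h j)) = 0"
    using same[of "\<lambda>x. x"] \<xi>(2,3) by simp_all
  show "integrable M (\<lambda>\<omega>. \<bar>X (h j) \<omega>\<bar> powr p)"
    "expectation (\<lambda>\<omega>. \<bar>X (h j) \<omega>\<bar> powr p) \<le> expectation (\<lambda>\<omega>. \<bar>\<xi> \<omega>\<bar> powr p)"
    using same[of "\<lambda>x. \<bar>x\<bar> powr p"] \<xi>(4) by simp_all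
qed (rule p)

lemma (in prob_space) indep_centered_seq_shifted_innovations:
  fixes \<epsilon> :: "int \<Rightarrow> 'a \<Rightarrow> real" and \<epsilon>' :: "'a \<Rightarrow> real"
  assumes indep: "indep_vars (\<lambda>_. borel) (\<lambda>i. case i of None \<Rightarrow> \<epsilon>' | Some k \<Rightarrow> \<epsilon> k) UNIV"
    and f: "\<And>x. 0 \<le> f x"
    and dens: "\<And>k. distributed M lborel (\<epsilon> k) (\<lambda>x. ennreal (f x))"
    and dens': "distributed M lborel \<epsilon>' (\<lambda>x. ennreal (f x))"
    and \<epsilon>0: "integrable M (\<epsilon> 0)" "expectation (\<epsilon> 0) = 0" "integrable M (\<lambda>\<omega>. \<bar>\<epsilon> 0 \<omega>\<bar> powr p)"
    and p: "2 \<le> p"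
  shows "indep_centered_seq M (\<lambda>j. \<epsilon> (int n - int j)) p (expectation (\<lambda>\<omega>. \<bar>\<epsilon> 0 \<omega>\<bar> powr p))"
    and "indep_centered_seq M (\<lambda>j. (\<epsilon>(0 := \<epsilon>')) (int n - int j)) p (expectation (\<lambda>\<omega>. \<bar>\<epsilon> 0 \<omega>\<bar> powr p))"
proof -
  define X where "X i = (case i of None \<Rightarrow> \<epsilon>' | Some k \<Rightarrow> \<epsilon> k)" for i
  have seq: "indep_centered_seq M (\<lambda>j. X (h j)) p (expectation (\<lambda>\<omega>. \<bar>\<epsilon> 0 \<omega>\<bar> powr p))"
    if "inj h" for h
    using indep[folded X_def] that dens dens' f \<epsilon>0 p
    by (intro indep_centered_seq_reindex[where I = UNIV and f = f]) (auto simp: X_def split: option.split)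
  show "indep_centered_seq M (\<lambda>j. \<epsilon> (int n - int j)) p (expectation (\<lambda>\<omega>. \<bar>\<epsilon> 0 \<omega>\<bar> powr p))"
    using seq[of "\<lambda>j. Some (int n - int j)"] by (simp add: X_def inj_def)
  have "(\<lambda>j. X (if int n = int j then None else Some (int n - int j)))
      = (\<lambda>j. (\<epsilon>(0 := \<epsilon>')) (int n - int j))"
    by (auto simp: X_def)
  moreover have "inj (\<lambda>j. if int n = int j then None else Some (int n - int j))"
    by (auto simp: inj_def split: if_splits)
  ultimately show "indep_centered_seq M (\<lambda>j. (\<epsilon>(0 := \<epsilon>')) (int n - int j)) p
      (expectation (\<lambda>\<omega>. \<bar>\<epsilon> 0 \<omega>\<bar> powr p))"
    using seq by metis
qed

theorem proposition4:
  fixes M :: "'a measure"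
    and \<epsilon> :: "int \<Rightarrow> 'a \<Rightarrow> real"
    and \<epsilon>0s :: "'a \<Rightarrow> real"
    and a :: "nat \<Rightarrow> real"
    and f f' :: "real \<Rightarrow> real"
    and \<gamma> :: real
  assumes "prob_space M"
    and indep: "prob_space.indep_vars M (\<lambda>_. borel)
                  (\<lambda>i. case i of None \<Rightarrow> \<epsilon>0s | Some k \<Rightarrow> \<epsilon> k) (UNIV :: int option set)"
    and f_nonneg: "\<And>x. f x \<ge> 0"
    and dens: "\<And>k. distributed M lborel (\<epsilon> k) (\<lambda>x. ennreal (f x))"
    and dens0s: "distributed M lborel \<epsilon>0s (\<lambda>x. ennreal (f x))"
    and f_deriv: "\<And>u. (f has_real_derivative f' u) (at u)"
    and mean0: "integrable M (\<epsilon> 0)" "prob_space.expectation M (\<epsilon> 0) = 0"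
    and var: "integrable M (\<lambda>\<omega>. (\<epsilon> 0 \<omega>)\<^sup>2)" "prob_space.variance M (\<epsilon> 0) > 0"
    and a0: "a 0 = 1"
    and a_sq: "summable (\<lambda>i. (a i)\<^sup>2)"
    and gamma: "\<gamma> \<ge> 0"
    and moment: "integrable M (\<lambda>\<omega>. \<bar>\<epsilon> 1 \<omega>\<bar> powr (2 + \<gamma>))"
    and kappa: "integrable lborel (\<lambda>u. (f' u)\<^sup>2 * (1 + \<bar>u\<bar>) powr \<gamma>)"
  shows "\<exists>C. \<forall>\<^sub>F n in sequentially.
           L2sq M (\<lambda>\<omega>. rho_w \<gamma> f'
              (\<Sum>j. a (Suc j) * \<epsilon> (int n - int j) \<omega>)
              (\<Sum>j. a (Suc j) * (\<epsilon>(0 := \<epsilon>0s)) (int n - int j) \<omega>))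
           \<le> ennreal ((C * \<bar>a (Suc n)\<bar>)\<^sup>2)"
proof -
  interpret prob_space M by fact
  define mp where "mp = expectation (\<lambda>\<omega>. \<bar>\<epsilon> 0 \<omega>\<bar> powr (2 + \<gamma>))"
  define \<kappa> where "\<kappa> = (LINT u|lborel. (f' u)\<^sup>2 * (1 + \<bar>u\<bar>) powr \<gamma>)"
  define B where "B = 2 powr (2 + \<gamma>) * (2 * mp)
    + 3 powr (2 + \<gamma>) * (2 * bracket_moment_bound (2 + \<gamma>) mp (\<lambda>j. a (Suc j)))"
  have "(\<lambda>x. \<bar>x\<bar> powr (2 + \<gamma>)) \<in> borel_measurable borel" by measurable
  from identically_distributed_integrable_iff[OF dens[of 0] dens[of 1] f_nonneg this] moment
  have "integrable M (\<lambda>\<omega>. \<bar>\<epsilon> 0 \<omega>\<bar> powr (2 + \<gamma>))" by simp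
  note innovations = indep_centered_seq_shifted_innovations[OF indep f_nonneg dens dens0s mean0 this,
      folded mp_def]
  have "summable (\<lambda>j. (a (Suc j))\<^sup>2)" using summable_Suc_iff[where f = "\<lambda>i. (a i)\<^sup>2"] a_sq by simp
  then have "L2sq M (\<lambda>\<omega>. rho_w \<gamma> f' (\<Sum>j. a (Suc j) * \<epsilon> (int n - int j) \<omega>)
      (\<Sum>j. a (Suc j) * (\<epsilon>(0 := \<epsilon>0s)) (int n - int j) \<omega>)) \<le> ennreal (\<kappa> * (a (Suc n))\<^sup>2 * B)" for n
    unfolding \<kappa>_def B_def using innovations gamma kappa by (intro L2sq_rho_w_resample_le) auto
  moreover have "0 \<le> \<kappa> * B"
    unfolding \<kappa>_def B_def mp_def
    by (intro mult_nonneg_nonneg add_nonneg_nonneg integral_nonneg_AE) (auto simp: bracket_moment_bound_def)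
  ultimately show ?thesis
    by (intro exI[of _ "sqrt (\<kappa> * B)"] always_eventually allI) (simp add: power_mult_distrib mult_ac)
qed

end
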